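(* Let $\lambda$ be a positive integer, $n\ge0$ an integer, and for integers $m\ge0$ let \[ I_{m,n}^{(\lambda)}=\int_0^\pi \cos(2m\theta)\,\log\big(C_n^{(\lambda)}(\cos\theta)\big)^2\,\mathrm{d}\theta . \] Then \[ I_{0,n}^{(\lambda)}=2\pi\log\left(\frac{(\lambda)_n}{n!}\right), \] and for $m\ge1$, \[ I_{m,n}^{(\lambda)}=\frac{(2\lambda-1)\pi}{m}+\frac{\pi}{(2m)!}\,\frac{d^{2m}}{dz^{2m}}\left.\left(\log\sum_{\nu=0}^{\lambda-1}\alpha_{\nu,n}^{(\lambda)}\big(z^{2n+2\lambda+2\nu}-z^{2\lambda-2\nu-2}\big)\right)\right|_{z=0}. \]
   Context: $C_n^{(\lambda)}(x)$ denotes the Gegenbauer polynomial of degree $n$ and parameter $\lambda$, defined by $(1-2xt+t^2)^{-\lambda}=\sum_{n\ge0}C_n^{(\lambda)}(x)t^n$. $(a)_k=\Gamma(a+k)/\Gamma(a)$ is the Pochhammer symbol, and $\alpha_{\nu,n}^{(\lambda)}=\dfrac{(1-\lambda)_\nu (n+1)_\nu}{\nu!\,(n+\lambda+1)_\nu}$. The polynomial $p(z)=\sum_{\nu=0}^{\lambda-1}\alpha_{\nu,n}^{(\lambda)}(z^{2n+2\lambda+2\nu}-z^{2\lambda-2\nu-2})$ satisfies $p(0)=-\alpha_{\lambda-1,n}^{(\lambda)}\neq0$, so $\log p(z)$ is holomorphic near $z=0$ for any choice of branch and its derivatives of order $\ge1$ at $0$ do not depend on the branch. *)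

theory Defs
  imports "HOL-Analysis.Analysis" "HOL-Computational_Algebra.Formal_Power_Series"
begin

definition gegenbauer :: "nat \<Rightarrow> nat \<Rightarrow> real \<Rightarrow> real" where
  "gegenbauer lam n x =
     fps_nth (inverse ((1 - fps_const (2 * x) * fps_X + fps_X ^ 2) ^ lam)) n"

definition alpha_coef :: "nat \<Rightarrow> nat \<Rightarrow> nat \<Rightarrow> real" where
  "alpha_coef lam \<nu> n =
     pochhammer (1 - real lam) \<nu> * pochhammer (real n + 1) \<nu>
       / (fact \<nu> * pochhammer (real n + real lam + 1) \<nu>)"

definition gpoly :: "nat \<Rightarrow> nat \<Rightarrow> complex \<Rightarrow> complex" where
  "gpoly lam n z = (\<Sum>\<nu>=0..lam-1. complex_of_real (alpha_coef lam \<nu> n) *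
      (z ^ (2*n + 2*lam + 2*\<nu>) - z ^ (2*lam - 2*\<nu> - 2)))"

end

theory Submission
  imports Defs "HOL-Real_Asymp.Real_Asymp"
begin

(* Factorising 1 - 2 cos\<theta> X + X^2 = (1 - e^{i\<theta>} X)(1 - e^{-i\<theta>} X) gives
   C_n^\<lambda>(cos \<theta>) = e^{-in\<theta>} Q(e^{2i\<theta>}) for a real polynomial Q of degree n.
   Since d/d\<theta> C_{n+1}^\<lambda>(cos \<theta>) = -2\<lambda> sin \<theta> C_n^{\<lambda>+1}(cos \<theta>), Rolle's theorem propagates
   the n zeros of the Chebyshev polynomial U_n(cos \<theta>) = sin((n+1)\<theta>)/sin \<theta> to n distinct zeros
   t_i \<in> (0,\<pi>) of C_n^\<lambda>(cos \<theta>) for every \<lambda> \<ge> 1.  Hence Q(w) = (\<lambda>)_n/n! \<Prod>(w - e^{2it_i}) and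
     log C_n^\<lambda>(cos \<theta>)^2 = 2 log((\<lambda>)_n/n!) + \<Sum>_i log(4 sin^2(\<theta> - t_i)),
   so the classical integrals \<integral>_0^\<pi> cos(2m\<theta>) log(4 sin^2(\<theta> - t)) d\<theta> = -\<pi> cos(2mt)/m
   (and 0 for m = 0) give I_{m,n} = -(\<pi>/m) \<Sum>_i cos(2mt_i).
   On the other side, induction on \<lambda> shows (w - 1)^{2\<lambda>-1} Q(w) = \<kappa> G(w) with p(z) = G(z^2), so
   p(z)/p(0) = (1 - z^2)^{2\<lambda>-1} \<Prod>_i (1 - z^2 e^{-2it_i}); the z^{2m} Taylor coefficient of its
   logarithm is -(2\<lambda> - 1)/m - (1/m) \<Sum>_i e^{-2imt_i}, whose real part matches I_{m,n}. *)

section \<open>The trigonometric form of C_n^\<lambda>(cos \<theta>)\<close>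

definition gegenbauer_weight :: "nat \<Rightarrow> nat \<Rightarrow> real" where
  "gegenbauer_weight lam k = pochhammer (real lam) k / fact k"

definition fourier_coeff :: "nat \<Rightarrow> nat \<Rightarrow> nat \<Rightarrow> real" where
  "fourier_coeff lam n k = gegenbauer_weight lam k * gegenbauer_weight lam (n - k)"

lemma gegenbauer_weight_eq_choose:
  assumes "lam > 0"
  shows "real ((lam + k - 1) choose k) = gegenbauer_weight lam k"
proof -
  have "real ((lam + k - 1) choose k) = real (lam + k - 1) gchoose k"
    by (simp add: binomial_gbinomial)
  also have "\<dots> = pochhammer (real (lam + k - 1) - real k + 1) k / fact k"
    by (rule gbinomial_pochhammer')
  also have "real (lam + k - 1) - real k + 1 = real lam"
    using assms by (simp add: of_nat_diff)
  finally show ?thesis by (simp add: gegenbauer_weight_def)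
qed

lemma gegenbauer_weight_pos: "lam > 0 \<Longrightarrow> gegenbauer_weight lam k > 0"
  by (simp add: gegenbauer_weight_def pochhammer_pos)

lemma gegenbauer_weight_0 [simp]: "gegenbauer_weight lam 0 = 1"
  by (simp add: gegenbauer_weight_def)

lemma gegenbauer_weight_1 [simp]: "gegenbauer_weight 1 k = 1" "gegenbauer_weight (Suc 0) k = 1"
  by (simp_all add: gegenbauer_weight_def pochhammer_fact[symmetric])

lemma gegenbauer_weight_Suc_param:
  "real lam * gegenbauer_weight (Suc lam) j = gegenbauer_weight lam j * (real lam + real j)"
proof -
  have "real lam * pochhammer (real lam + 1) j = pochhammer (real lam) j * (real lam + real j)"
    by (metis pochhammer_Suc pochhammer_rec)
  thus ?thesis by (simp add: gegenbauer_weight_def field_simps)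
qed

lemma gegenbauer_weight_Suc_param':
  "real lam * gegenbauer_weight (Suc lam) j = real (Suc j) * gegenbauer_weight lam (Suc j)"
proof -
  have "real lam * pochhammer (real lam + 1) j = pochhammer (real lam) (Suc j)"
    by (simp add: pochhammer_rec)
  moreover have "real (Suc j) * gegenbauer_weight lam (Suc j) = pochhammer (real lam) (Suc j) / fact j"
    by (simp add: gegenbauer_weight_def fact_Suc del: of_nat_Suc)
  ultimately show ?thesis by (simp add: gegenbauer_weight_def add.commute)
qed

definition fps_of_real :: "real fps \<Rightarrow> 'a::real_field fps" where
  "fps_of_real F = Abs_fps (\<lambda>k. of_real (fps_nth F k))"

lemma fps_nth_fps_of_real [simp]: "fps_nth (fps_of_real F) k = of_real (fps_nth F k)"
  by (simp add: fps_of_real_def)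

lemma fps_of_real_mult: "fps_of_real (F * G) = fps_of_real F * fps_of_real G"
  by (rule fps_ext) (simp add: fps_mult_nth)

lemma fps_of_real_one: "fps_of_real 1 = 1"
  by (rule fps_ext) simp

lemma fps_of_real_add: "fps_of_real (F + G) = fps_of_real F + fps_of_real G"
  by (rule fps_ext) simp

lemma fps_of_real_diff: "fps_of_real (F - G) = fps_of_real F - fps_of_real G"
  by (rule fps_ext) simp

lemma fps_of_real_const: "fps_of_real (fps_const c) = fps_const (of_real c)"
  by (rule fps_ext) simp

lemma fps_of_real_X: "fps_of_real fps_X = fps_X"
  by (rule fps_ext) (simp add: fps_X_def)

lemma fps_of_real_power: "fps_of_real (F ^ k) = fps_of_real F ^ k"
  by (induction k) (simp_all add: fps_of_real_one fps_of_real_mult)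

lemma fps_of_real_inverse:
  assumes "fps_nth F 0 \<noteq> 0"
  shows "fps_of_real (inverse F) = inverse (fps_of_real F)"
proof -
  have "F * inverse F = 1" using assms by (simp add: inverse_mult_eq_1')
  hence "fps_of_real F * fps_of_real (inverse F) = 1" by (metis fps_of_real_mult fps_of_real_one)
  thus ?thesis by (metis fps_inverse_unique)
qed

lemma gegenbauer_cos_eq_cis_sum:
  assumes "lam > 0"
  shows "complex_of_real (gegenbauer lam n (cos t)) =
         (\<Sum>k\<le>n. complex_of_real (fourier_coeff lam n k) * cis (t * (2 * real k - real n)))"
proof -
  define z where "z = cis t"
  define A where "A = (1 - fps_const (2 * cos t) * fps_X + fps_X ^ 2 :: real fps)"
  define E where "E w = Abs_fps (\<lambda>k. of_nat (lam + k - 1 choose k) * w ^ k)" for w :: complex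
  have A0: "fps_nth (A ^ lam) 0 \<noteq> 0" by (simp add: A_def fps_nth_power_0)
  have "fps_of_real A = 1 - fps_const (complex_of_real (2 * cos t)) * fps_X + fps_X ^ 2"
    by (simp add: A_def fps_of_real_add fps_of_real_diff fps_of_real_mult fps_of_real_const
        fps_of_real_X fps_of_real_power fps_of_real_one)
  also have "complex_of_real (2 * cos t) = z + cnj z"
    by (simp add: z_def cis.ctr complex_eq_iff)
  also have "fps_X ^ 2 = fps_const (z * cnj z) * (fps_X ^ 2 :: complex fps)"
    by (simp add: z_def cis_cnj cis_mult)
  also have "1 - fps_const (z + cnj z) * fps_X + fps_const (z * cnj z) * fps_X ^ 2
      = (1 - fps_const z * fps_X) * (1 - fps_const (cnj z) * (fps_X :: complex fps))"
    by (simp add: algebra_simps power2_eq_square)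
  finally have A_factor: "fps_of_real A = (1 - fps_const z * fps_X) * (1 - fps_const (cnj z) * fps_X)" .
  have "complex_of_real (gegenbauer lam n (cos t)) = fps_nth (fps_of_real (inverse (A ^ lam))) n"
    by (simp add: gegenbauer_def A_def)
  also have "fps_of_real (inverse (A ^ lam)) =
      inverse ((1 - fps_const z * fps_X) ^ lam) * inverse ((1 - fps_const (cnj z) * fps_X) ^ lam)"
    using A0 by (simp add: fps_of_real_inverse fps_of_real_power A_factor power_mult_distrib fps_inverse_mult)
  also have "\<dots> = E z * E (cnj z)"
    using assms by (simp add: one_minus_const_fps_X_neg_power' E_def)
  also have "fps_nth (E z * E (cnj z)) n =
      (\<Sum>k\<le>n. of_nat (lam + k - 1 choose k) * of_nat (lam + (n - k) - 1 choose (n - k)) *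
               (z ^ k * cnj z ^ (n - k)))"
    by (simp add: fps_mult_nth E_def atLeast0AtMost algebra_simps)
  also have "\<dots> = (\<Sum>k\<le>n. complex_of_real (fourier_coeff lam n k) * cis (t * (2 * real k - real n)))"
  proof (rule sum.cong)
    fix k assume "k \<in> {..n}"
    hence "z ^ k * cnj z ^ (n - k) = cis (t * (2 * real k - real n))"
      by (simp add: z_def cis_cnj Complex.DeMoivre cis_mult of_nat_diff algebra_simps)
    thus "of_nat (lam + k - 1 choose k) * of_nat (lam + (n - k) - 1 choose (n - k)) * (z ^ k * cnj z ^ (n - k))
          = complex_of_real (fourier_coeff lam n k) * cis (t * (2 * real k - real n))"
      using gegenbauer_weight_eq_choose[OF assms, of k] gegenbauer_weight_eq_choose[OF assms, of "n - k"]
      unfolding fourier_coeff_def by (metis of_real_mult of_real_of_nat_eq)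
  qed simp
  finally show ?thesis .
qed

lemma gegenbauer_cos_eq_cos_sum:
  assumes "lam > 0"
  shows "gegenbauer lam n (cos t) = (\<Sum>k\<le>n. fourier_coeff lam n k * cos (t * (2 * real k - real n)))"
  using arg_cong[OF gegenbauer_cos_eq_cis_sum[OF assms], of Re] by (simp add: Re_sum cis.sel)

section \<open>The zeros of C_n^\<lambda>(cos \<theta>) on (0, \<pi>)\<close>

lemma fourier_coeff_Suc_param:
  assumes "k \<le> Suc n"
  shows "(real (Suc n) - 2 * real k) * fourier_coeff lam (Suc n) k =
         real lam * ((if k \<le> n then fourier_coeff (Suc lam) n k else 0)
                     - (if k \<ge> 1 then fourier_coeff (Suc lam) n (k - 1) else 0))"
proof (cases "k = 0 \<or> k = Suc n")
  case True
  thus ?thesis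
    using gegenbauer_weight_Suc_param'[of lam n] by (auto simp: fourier_coeff_def algebra_simps)
next
  case False
  then obtain j where j: "k = Suc j" by (cases k) auto
  with False assms have "j < n" by simp
  then obtain r where r: "n = j + Suc r" by (auto dest: less_imp_Suc_add)
  let ?w = "gegenbauer_weight lam" and ?w' = "gegenbauer_weight (Suc lam)"
  have "real lam * (real lam * (?w' (Suc j) * ?w' r - ?w' j * ?w' (Suc r)))
      = (real lam * ?w' (Suc j)) * (real lam * ?w' r) - (real lam * ?w' j) * (real lam * ?w' (Suc r))"
    by (simp add: algebra_simps)
  also have "\<dots> = real lam * ((real (Suc r) - real (Suc j)) * (?w (Suc j) * ?w (Suc r)))"
    unfolding gegenbauer_weight_Suc_param'[of lam r] gegenbauer_weight_Suc_param'[of lam j]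
      gegenbauer_weight_Suc_param[of lam "Suc j"] gegenbauer_weight_Suc_param[of lam "Suc r"]
    by (simp add: algebra_simps)
  finally have *: "real lam * (real lam * (?w' (Suc j) * ?w' r - ?w' j * ?w' (Suc r)))
      = real lam * ((real (Suc r) - real (Suc j)) * (?w (Suc j) * ?w (Suc r)))" .
  show ?thesis
  proof (cases "lam = 0")
    case True
    thus ?thesis by (simp add: fourier_coeff_def gegenbauer_weight_def j r pochhammer_0_left)
  next
    case False
    with * have "real lam * (?w' (Suc j) * ?w' r - ?w' j * ?w' (Suc r))
        = (real (Suc r) - real (Suc j)) * (?w (Suc j) * ?w (Suc r))" by simp
    moreover have "Suc n - Suc j = Suc r" "n - Suc j = r" "n - j = Suc r" using r by auto
    ultimately show ?thesis using j r by (simp add: fourier_coeff_def algebra_simps)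
  qed
qed

lemma gegenbauer_cos_has_real_derivative:
  assumes "lam > 0"
  shows "((\<lambda>t. gegenbauer lam (Suc n) (cos t)) has_real_derivative
           - 2 * real lam * sin t * gegenbauer (Suc lam) n (cos t)) (at t)"
proof -
  define c where "c k = 2 * real k - real (Suc n)" for k
  define s where "s k = sin (t * c k)" for k
  define b where "b k = fourier_coeff (Suc lam) n k" for k
  define B0 where "B0 k = (if k \<le> n then b k else 0)" for k
  define B1 where "B1 k = (if k \<ge> 1 then b (k - 1) else 0)" for k
  have D: "((\<lambda>t. gegenbauer lam (Suc n) (cos t)) has_real_derivative
          (\<Sum>k\<le>Suc n. fourier_coeff lam (Suc n) k * (- sin (t * c k) * c k))) (at t)"
    unfolding gegenbauer_cos_eq_cos_sum[OF assms] c_def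
    by (auto intro!: derivative_eq_intros sum.cong simp: algebra_simps)
  have "- 2 * real lam * sin t * gegenbauer (Suc lam) n (cos t)
      = - real lam * (\<Sum>k\<le>n. b k * (2 * sin t * cos (t * (2 * real k - real n))))"
    using assms by (simp add: gegenbauer_cos_eq_cos_sum b_def sum_distrib_left algebra_simps)
  also have "\<dots> = - real lam * (\<Sum>k\<le>n. b k * (s (Suc k) - s k))"
  proof -
    have "2 * sin t * cos (t * (2 * real k - real n)) = s (Suc k) - s k" for k
    proof -
      have "s (Suc k) = sin (t * (2 * real k - real n) + t)" "s k = sin (t * (2 * real k - real n) - t)"
        by (simp_all add: s_def c_def algebra_simps)
      thus ?thesis by (simp add: sin_add sin_diff)
    qed
    thus ?thesis by simp
  qed
  also have "\<dots> = - real lam * ((\<Sum>k\<le>Suc n. B1 k * s k) - (\<Sum>k\<le>Suc n. B0 k * s k))"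
  proof -
    have "(\<Sum>k\<le>Suc n. B1 k * s k) = (\<Sum>k\<le>n. b k * s (Suc k))"
      by (subst sum.atMost_Suc_shift) (simp add: B1_def)
    moreover have "(\<Sum>k\<le>Suc n. B0 k * s k) = (\<Sum>k\<le>n. b k * s k)"
      by (simp add: B0_def)
    ultimately show ?thesis by (simp add: sum_subtractf algebra_simps)
  qed
  also have "\<dots> = (\<Sum>k\<le>Suc n. real lam * (B0 k - B1 k) * s k)"
    unfolding sum_subtractf[symmetric] sum_distrib_left by (rule sum.cong) (simp_all add: algebra_simps)
  also have "\<dots> = (\<Sum>k\<le>Suc n. (real (Suc n) - 2 * real k) * fourier_coeff lam (Suc n) k * s k)"
  proof (rule sum.cong)
    fix k assume "k \<in> {..Suc n}"
    hence "(real (Suc n) - 2 * real k) * fourier_coeff lam (Suc n) k = real lam * (B0 k - B1 k)"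
      using fourier_coeff_Suc_param[of k n lam] by (simp add: B0_def B1_def b_def)
    thus "real lam * (B0 k - B1 k) * s k = (real (Suc n) - 2 * real k) * fourier_coeff lam (Suc n) k * s k"
      by simp
  qed simp
  also have "\<dots> = (\<Sum>k\<le>Suc n. fourier_coeff lam (Suc n) k * (- sin (t * c k) * c k))"
    by (rule sum.cong) (auto simp: s_def c_def algebra_simps)
  finally show ?thesis using D by simp
qed

lemma sin_mult_gegenbauer_1: "sin t * gegenbauer 1 n (cos t) = sin ((real n + 1) * t)"
proof -
  define g where "g k = sin (t * (2 * real k - real n - 1))" for k
  have "2 * (sin t * gegenbauer 1 n (cos t)) = (\<Sum>k<Suc n. g (Suc k) - g k)"
    unfolding gegenbauer_cos_eq_cos_sum[OF zero_less_one] fourier_coeff_def lessThan_Suc_atMost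
      sum_distrib_left
  proof (rule sum.cong)
    fix k
    have "g (Suc k) = sin (t * (2 * real k - real n) + t)" "g k = sin (t * (2 * real k - real n) - t)"
      by (simp_all add: g_def algebra_simps)
    thus "2 * (sin t * (gegenbauer_weight 1 k * gegenbauer_weight 1 (n - k) * cos (t * (2 * real k - real n))))
          = g (Suc k) - g k"
      by (simp add: sin_add sin_diff)
  qed simp
  also have "\<dots> = g (Suc n) - g 0" by (rule sum_lessThan_telescope)
  also have "\<dots> = 2 * sin ((real n + 1) * t)"
  proof -
    have "g (Suc n) = sin ((real n + 1) * t)" by (simp add: g_def algebra_simps)
    moreover have "t * (2 * real 0 - real n - 1) = - ((real n + 1) * t)" by (simp add: algebra_simps)
    hence "g 0 = - sin ((real n + 1) * t)" unfolding g_def by (simp only: sin_minus)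
    ultimately show ?thesis by simp
  qed
  finally show ?thesis by simp
qed

definition zeros_in_0_pi :: "(real \<Rightarrow> real) \<Rightarrow> nat \<Rightarrow> (nat \<Rightarrow> real) \<Rightarrow> bool" where
  "zeros_in_0_pi f n t \<longleftrightarrow> strict_mono_on {..<n} t \<and> (\<forall>i<n. 0 < t i \<and> t i < pi \<and> f (t i) = 0)"

lemma Rolle_interlacing:
  fixes f :: "real \<Rightarrow> real"
  assumes deriv: "\<And>x. (f has_real_derivative f' x) (at x)"
    and mono: "strict_mono_on {..n} t" and zero: "\<And>i. i \<le> n \<Longrightarrow> f (t i) = 0"
  obtains s where "strict_mono_on {..<n} s" "\<And>i. i < n \<Longrightarrow> t i < s i \<and> s i < t (Suc i) \<and> f' (s i) = 0"
proof -
  have "\<exists>z. t i < z \<and> z < t (Suc i) \<and> f' z = 0" if i: "i < n" for i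
  proof -
    have "t i < t (Suc i)" using mono i by (simp add: strict_mono_on_def)
    moreover have "continuous_on {t i..t (Suc i)} f"
      by (intro continuous_at_imp_continuous_on ballI DERIV_isCont[OF deriv])
    moreover have "f differentiable (at x)" for x
      using deriv unfolding real_differentiable_def by blast
    ultimately obtain z where "t i < z" "z < t (Suc i)" "(f has_real_derivative 0) (at z)"
      using Rolle[of "t i" "t (Suc i)" f] zero i by auto
    thus ?thesis using DERIV_unique[OF deriv] by blast
  qed
  then obtain s where s: "\<And>i. i < n \<Longrightarrow> t i < s i \<and> s i < t (Suc i) \<and> f' (s i) = 0"
    by metis
  have "s i < s j" if "i < j" "j < n" for i j
  proof -
    have "t (Suc i) \<le> t j"
    proof (cases "Suc i = j")
      case False
      thus ?thesis using that by (intro less_imp_le strict_mono_onD[OF mono]) auto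
    qed simp
    thus ?thesis using s[of i] s[of j] that by linarith
  qed
  hence "strict_mono_on {..<n} s" by (auto simp: strict_mono_on_def)
  with s that show ?thesis by blast
qed

lemma gegenbauer_cos_zeros:
  assumes "lam \<ge> 1"
  shows "\<exists>t. zeros_in_0_pi (\<lambda>x. gegenbauer lam n (cos x)) n t"
  using assms
proof (induction lam arbitrary: n rule: nat_induct_at_least)
  case base
  define t where "t i = (real i + 1) * pi / (real n + 1)" for i
  have "0 < t i \<and> t i < pi \<and> gegenbauer 1 n (cos (t i)) = 0" if "i < n" for i
  proof (intro conjI)
    show "0 < t i" unfolding t_def by (intro divide_pos_pos mult_pos_pos) auto
    show "t i < pi" using that by (simp add: t_def field_simps)
    have "sin (t i) > 0" using \<open>0 < t i\<close> \<open>t i < pi\<close> by (intro sin_gt_zero)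
    moreover have "(real n + 1) * t i = real (Suc i) * pi" by (simp add: t_def field_simps)
    hence "sin ((real n + 1) * t i) = 0" by (simp only: sin_npi)
    ultimately show "gegenbauer 1 n (cos (t i)) = 0"
      using sin_mult_gegenbauer_1[of "t i" n] by simp
  qed
  moreover have "strict_mono_on {..<n} t"
    by (auto simp: strict_mono_on_def t_def intro!: divide_strict_right_mono)
  ultimately show ?case unfolding zeros_in_0_pi_def by blast
next
  case (Suc lam)
  then obtain t where t: "zeros_in_0_pi (\<lambda>x. gegenbauer lam (Suc n) (cos x)) (Suc n) t"
    by blast
  obtain s where s_mono: "strict_mono_on {..<n} s"
    and s: "\<And>i. i < n \<Longrightarrow> t i < s i \<and> s i < t (Suc i) \<and>
                              - 2 * real lam * sin (s i) * gegenbauer (Suc lam) n (cos (s i)) = 0"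
  proof (rule Rolle_interlacing)
    show "\<And>x. ((\<lambda>x. gegenbauer lam (Suc n) (cos x)) has_real_derivative
               - 2 * real lam * sin x * gegenbauer (Suc lam) n (cos x)) (at x)"
      using Suc by (intro gegenbauer_cos_has_real_derivative) simp
  qed (use t in \<open>auto simp: zeros_in_0_pi_def lessThan_Suc_atMost\<close>)
  have "0 < s i \<and> s i < pi \<and> gegenbauer (Suc lam) n (cos (s i)) = 0" if i: "i < n" for i
  proof -
    have "0 < t i" "t (Suc i) < pi" using t i by (auto simp: zeros_in_0_pi_def)
    hence "0 < s i" "s i < pi" using s[OF i] by linarith+
    moreover from this have "sin (s i) > 0" by (intro sin_gt_zero)
    ultimately show ?thesis using s[OF i] Suc by simp
  qed
  with s_mono show ?case unfolding zeros_in_0_pi_def by blast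
qed


section \<open>The polynomial identity behind p\<close>

definition fourier_poly :: "nat \<Rightarrow> nat \<Rightarrow> real poly" where
  "fourier_poly lam n = (\<Sum>k\<le>n. monom (fourier_coeff lam n k) k)"

definition alpha_poly :: "nat \<Rightarrow> nat \<Rightarrow> real poly" where
  "alpha_poly lam n =
     (\<Sum>v<lam. smult (alpha_coef lam v n) (monom 1 (n + lam + v) - monom 1 (lam - 1 - v)))"

definition kappa :: "nat \<Rightarrow> nat \<Rightarrow> real" where
  "kappa lam n = (-1) ^ (lam - 1) * real (n + 2 * lam - 1 choose (lam - 1))"

(* Writing F = (w - 1)^{2L-1} Q, one has (w - 1) F' - (2L - 1) F = (w - 1)^{2L} Q', so
   raise_op L n F = (w - 1)^{2L} (2 w Q' - (n + 1) Q).  For Q = fourier_poly L (Suc n) this is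
   (w - 1)^{2L+1} L fourier_poly (Suc L) n, while on alpha_poly L (Suc n) it acts coefficientwise. *)
definition raise_op :: "nat \<Rightarrow> nat \<Rightarrow> real poly \<Rightarrow> real poly" where
  "raise_op L n F = smult 2 (pCons 0 ([:-1, 1:] * pderiv F - smult (2 * real L - 1) F))
                    - smult (real (Suc n)) ([:-1, 1:] * F)"

lemma coeff_fourier_poly: "coeff (fourier_poly lam n) j = (if j \<le> n then fourier_coeff lam n j else 0)"
  unfolding fourier_poly_def coeff_sum by (simp add: coeff_monom sum.delta)

lemma coeff_linear_mult:
  "coeff ([:-1, 1:] * p) j = (if j = 0 then 0 else coeff p (j - 1)) - coeff (p :: 'a::comm_ring_1 poly) j"
  by (cases j) (simp_all add: coeff_pCons)

lemma fourier_poly_Suc_param: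
  "smult (real L) ([:-1, 1:] * fourier_poly (Suc L) n) =
   smult 2 (pCons 0 (pderiv (fourier_poly L (Suc n)))) - smult (real (Suc n)) (fourier_poly L (Suc n))"
proof (rule poly_eqI)
  fix j
  show "coeff (smult (real L) ([:-1, 1:] * fourier_poly (Suc L) n)) j =
        coeff (smult 2 (pCons 0 (pderiv (fourier_poly L (Suc n)))) - smult (real (Suc n)) (fourier_poly L (Suc n))) j"
  proof (cases "j \<le> Suc n")
    case True
    thus ?thesis
      using fourier_coeff_Suc_param[OF True, of L]
      by (cases j) (simp_all add: coeff_linear_mult coeff_fourier_poly coeff_pderiv algebra_simps)
  next
    case False
    thus ?thesis by (cases j) (simp_all add: coeff_linear_mult coeff_fourier_poly coeff_pderiv)
  qed
qed

lemma coeff_alpha_poly: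
  "coeff (alpha_poly lam n) j =
     (if n + lam \<le> j \<and> j < n + 2 * lam then alpha_coef lam (j - (n + lam)) n
      else if j < lam then - alpha_coef lam (lam - 1 - j) n else 0)"
proof -
  have "coeff (alpha_poly lam n) j =
      (\<Sum>v<lam. if v = j - (n + lam) \<and> n + lam \<le> j then alpha_coef lam v n else 0)
      - (\<Sum>v<lam. if v = lam - 1 - j \<and> j < lam then alpha_coef lam v n else 0)"
    unfolding alpha_poly_def coeff_sum sum_subtractf[symmetric]
    by (rule sum.cong) (auto simp: coeff_monom)
  also have "(\<Sum>v<lam. if v = j - (n + lam) \<and> n + lam \<le> j then alpha_coef lam v n else 0)
      = (if n + lam \<le> j \<and> j < n + 2 * lam then alpha_coef lam (j - (n + lam)) n else 0)"
    by (cases "n + lam \<le> j") (auto simp: sum.delta)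
  also have "(\<Sum>v<lam. if v = lam - 1 - j \<and> j < lam then alpha_coef lam v n else 0)
      = (if j < lam then alpha_coef lam (lam - 1 - j) n else 0)"
    by (cases "j < lam") (auto simp: sum.delta)
  finally show ?thesis by auto
qed

lemma coeff_alpha_poly_low: "j < lam \<Longrightarrow> coeff (alpha_poly lam n) j = - alpha_coef lam (lam - 1 - j) n"
  by (simp add: coeff_alpha_poly)

lemma coeff_alpha_poly_mid: "lam \<le> j \<Longrightarrow> j < n + lam \<Longrightarrow> coeff (alpha_poly lam n) j = 0"
  by (simp add: coeff_alpha_poly)

lemma coeff_alpha_poly_high:
  "n + lam \<le> j \<Longrightarrow> j < n + 2 * lam \<Longrightarrow> coeff (alpha_poly lam n) j = alpha_coef lam (j - (n + lam)) n"
  by (simp add: coeff_alpha_poly)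

lemma coeff_alpha_poly_top: "n + 2 * lam \<le> j \<Longrightarrow> coeff (alpha_poly lam n) j = 0"
  by (simp add: coeff_alpha_poly)

lemma alpha_coef_0 [simp]: "alpha_coef lam 0 n = 1"
  by (simp add: alpha_coef_def)

lemma alpha_coef_param_eq_0:
  assumes "lam \<ge> 1"
  shows "alpha_coef lam lam n = 0"
proof -
  have "pochhammer (1 - real lam) lam = 0"
    using assms by (subst pochhammer_eq_0_iff) (auto intro!: exI[of _ "lam - 1"] simp: of_nat_diff)
  thus ?thesis by (simp add: alpha_coef_def)
qed

lemma alpha_coef_Suc_param:
  assumes "L \<ge> 1"
  shows "(2 * real v + real n + 1 - 2 * real L) * (if v \<ge> 1 then alpha_coef L (v - 1) (Suc n) else 0)
         - (2 * real v + real n + 2 * real L + 1) * alpha_coef L v (Suc n)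
       = - (2 * real L + real n + 1) * alpha_coef (Suc L) v n"
proof (cases v)
  case 0
  thus ?thesis by simp
next
  case (Suc u)
  define c where "c = pochhammer (1 - real L) u"
  define p where "p = pochhammer (real n + 2) u"
  define q where "q = pochhammer (real n + real L + 2) u"
  have q0: "q > 0" unfolding q_def by (intro pochhammer_pos) auto
  have A0: "alpha_coef L u (Suc n) = c * p / (fact u * q)"
    by (simp add: alpha_coef_def c_def p_def q_def add_ac)
  have A1: "alpha_coef L (Suc u) (Suc n) = c * (1 - real L + real u) * (p * (real n + 2 + real u))
      / (fact u * (real u + 1) * (q * (real n + real L + 2 + real u)))"
    by (simp add: alpha_coef_def c_def p_def q_def pochhammer_Suc add_ac fact_Suc algebra_simps)
  have B1: "alpha_coef (Suc L) (Suc u) n = (- real L) * c * ((real n + 1) * p)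
      / (fact u * (real u + 1) * (q * (real n + real L + 2 + real u)))"
  proof -
    have "pochhammer (1 - real (Suc L)) (Suc u) = (- real L) * c"
      by (simp add: pochhammer_rec c_def)
    moreover have "pochhammer (real n + 1) (Suc u) = (real n + 1) * p"
      by (simp add: pochhammer_rec p_def add_ac)
    moreover have "pochhammer (real n + real (Suc L) + 1) (Suc u) = q * (real n + real L + 2 + real u)"
      by (simp add: pochhammer_Suc q_def add_ac)
    ultimately show ?thesis by (simp add: alpha_coef_def fact_Suc algebra_simps)
  qed
  have poly: "(2 * real u + real n + 3 - 2 * real L) * (real u + 1) * (real n + real L + 2 + real u)
      - (2 * real u + real n + 2 * real L + 3) * (1 - real L + real u) * (real n + 2 + real u)
      = (2 * real L + real n + 1) * real L * (real n + 1)"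
    by (simp add: algebra_simps)
  define D where "D = fact u * (real u + 1) * (q * (real n + real L + 2 + real u))"
  have "D > 0" unfolding D_def using q0 by (intro mult_pos_pos) auto
  hence D0: "D \<noteq> 0" by simp
  have D_eq: "D = (fact u * q) * ((real u + 1) * (real n + real L + 2 + real u))"
    by (simp add: D_def algebra_simps)
  have A0': "alpha_coef L u (Suc n) = c * p * ((real u + 1) * (real n + real L + 2 + real u)) / D"
    unfolding A0 D_eq by (rule nonzero_mult_divide_mult_cancel_right[symmetric]) simp
  have e1: "((2 * real (Suc u) + real n + 1 - 2 * real L) * alpha_coef L u (Suc n)
         - (2 * real (Suc u) + real n + 2 * real L + 1) * alpha_coef L (Suc u) (Suc n)) * D
       = c * p * ((2 * real u + real n + 3 - 2 * real L) * (real u + 1) * (real n + real L + 2 + real u)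
      - (2 * real u + real n + 2 * real L + 3) * (1 - real L + real u) * (real n + 2 + real u))"
    unfolding A0' A1 D_def[symmetric] using D0 by (simp add: field_simps)
  have e2: "(- (2 * real L + real n + 1) * alpha_coef (Suc L) (Suc u) n) * D
      = c * p * ((2 * real L + real n + 1) * real L * (real n + 1))"
    unfolding B1 D_def[symmetric] using D0 by (simp add: field_simps)
  have "(2 * real (Suc u) + real n + 1 - 2 * real L) * alpha_coef L u (Suc n)
         - (2 * real (Suc u) + real n + 2 * real L + 1) * alpha_coef L (Suc u) (Suc n)
       = - (2 * real L + real n + 1) * alpha_coef (Suc L) (Suc u) n"
    using e1 e2 poly D0 by (metis mult_right_cancel)
  thus ?thesis using Suc by simp
qed

lemma kappa_Suc_param:
  "real (Suc d) * kappa (Suc (Suc d)) n = - (2 * real (Suc d) + real n + 1) * kappa (Suc d) (Suc n)"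
proof -
  have nat1: "n + 2 * Suc (Suc d) - 1 = Suc (n + 2 * Suc d)" by simp
  have nat2: "Suc n + 2 * Suc d - 1 = n + 2 * Suc d" by simp
  have b: "Suc d * (Suc (n + 2 * Suc d) choose Suc d) = Suc (n + 2 * Suc d) * (n + 2 * Suc d choose d)"
    using binomial_absorption[of d "Suc (n + 2 * Suc d)"] by (simp only: diff_Suc_1)
  have b': "real (Suc d) * real (Suc (n + 2 * Suc d) choose Suc d)
      = real (Suc (n + 2 * Suc d)) * real (n + 2 * Suc d choose d)"
    using arg_cong[OF b, of real] by (simp only: of_nat_mult)
  have r: "real (Suc (n + 2 * Suc d)) = 2 * real (Suc d) + real n + 1" by simp
  have gen: "\<And>C1 C2 x y :: real. x * C1 = y * C2 \<Longrightarrow> x * ((-1) ^ Suc d * C1) = - y * ((-1) ^ d * C2)"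
    by (simp add: algebra_simps)
  show ?thesis unfolding kappa_def nat1 nat2 diff_Suc_1
    by (rule gen) (use b' r in simp)
qed

lemma raise_op_smult: "raise_op L n (smult c F) = smult c (raise_op L n F)"
proof (rule poly_eqI)
  fix j
  show "coeff (raise_op L n (smult c F)) j = coeff (smult c (raise_op L n F)) j"
    by (cases j) (simp_all add: raise_op_def coeff_linear_mult coeff_pderiv coeff_pCons pderiv_smult
        algebra_simps split: nat.split)
qed

lemma coeff_raise_op_0: "coeff (raise_op L n G) 0 = real (Suc n) * coeff G 0"
  by (simp add: raise_op_def coeff_linear_mult)

lemma coeff_raise_op_Suc:
  "coeff (raise_op L n G) (Suc i) =
     (2 * real i - 4 * real L + 1 - real n) * coeff G i + (real n - 1 - 2 * real i) * coeff G (Suc i)"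
  by (cases i) (simp_all add: raise_op_def coeff_linear_mult coeff_pderiv algebra_simps)

lemma coeff_raise_op_alpha_poly_low:
  assumes L: "L \<ge> 1" and i: "Suc i \<le> L"
  shows "coeff (raise_op L n (alpha_poly L (Suc n))) (Suc i) =
         - (2 * real L + real n + 1) * coeff (alpha_poly (Suc L) n) (Suc i)"
proof -
  define mu where "mu = L - Suc i"
  have imu: "i + mu + 1 = L" using i by (simp add: mu_def)
  have g1: "coeff (alpha_poly L (Suc n)) i = - alpha_coef L mu (Suc n)"
    using imu by (simp add: coeff_alpha_poly_low mu_def)
  have g2: "coeff (alpha_poly L (Suc n)) (Suc i) = - (if mu \<ge> 1 then alpha_coef L (mu - 1) (Suc n) else 0)"
    using imu by (cases "mu \<ge> 1") (simp_all add: coeff_alpha_poly_low coeff_alpha_poly_mid mu_def)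
  have g3: "coeff (alpha_poly (Suc L) n) (Suc i) = - alpha_coef (Suc L) mu n"
    using imu by (simp add: coeff_alpha_poly_low mu_def)
  have ri: "real i = real L - real mu - 1" using imu by simp
  show ?thesis
    using alpha_coef_Suc_param[OF L, of mu n] unfolding coeff_raise_op_Suc g1 g2 g3 ri
    by (simp add: algebra_simps)
qed

lemma coeff_raise_op_alpha_poly_high:
  assumes L: "L \<ge> 1" and i: "n + L \<le> i" "Suc i \<le> n + 2 * L + 1"
  shows "coeff (raise_op L n (alpha_poly L (Suc n))) (Suc i) =
         - (2 * real L + real n + 1) * coeff (alpha_poly (Suc L) n) (Suc i)"
proof -
  define nu where "nu = i - (n + L)"
  have inu: "i = nu + n + L" using i by (simp add: nu_def)
  have g1: "coeff (alpha_poly L (Suc n)) i = (if nu \<ge> 1 then alpha_coef L (nu - 1) (Suc n) else 0)"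
    using inu i L by (cases "nu \<ge> 1") (simp_all add: coeff_alpha_poly_high coeff_alpha_poly_mid)
  have g2: "coeff (alpha_poly L (Suc n)) (Suc i) = alpha_coef L nu (Suc n)"
    using inu i alpha_coef_param_eq_0[OF L]
    by (cases "nu = L") (simp_all add: coeff_alpha_poly_high coeff_alpha_poly_top)
  have g3: "coeff (alpha_poly (Suc L) n) (Suc i) = alpha_coef (Suc L) nu n"
    using inu i by (simp add: coeff_alpha_poly_high)
  have ri: "real i = real nu + real n + real L" using inu by simp
  show ?thesis
    using alpha_coef_Suc_param[OF L, of nu n] unfolding coeff_raise_op_Suc g1 g2 g3 ri
    by (simp add: algebra_simps)
qed

lemma raise_op_alpha_poly:
  assumes L: "L \<ge> 1"
  shows "raise_op L n (alpha_poly L (Suc n)) = smult (- (2 * real L + real n + 1)) (alpha_poly (Suc L) n)"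
proof (rule poly_eqI)
  fix j
  show "coeff (raise_op L n (alpha_poly L (Suc n))) j =
        coeff (smult (- (2 * real L + real n + 1)) (alpha_poly (Suc L) n)) j"
  proof (cases j)
    case 0
    have low: "coeff (alpha_poly L (Suc n)) 0 = - alpha_coef L (L - 1) (Suc n)"
      "coeff (alpha_poly (Suc L) n) 0 = - alpha_coef (Suc L) L n"
      using L by (simp_all add: coeff_alpha_poly_low)
    have "real (Suc n) * alpha_coef L (L - 1) (Suc n) = - (2 * real L + real n + 1) * alpha_coef (Suc L) L n"
      using alpha_coef_Suc_param[OF L, of L n] alpha_coef_param_eq_0[OF L] L by (simp add: algebra_simps)
    thus ?thesis unfolding 0 coeff_smult coeff_raise_op_0 low by (simp add: algebra_simps)
  next
    case (Suc i)
    consider "Suc i \<le> L" | "L \<le> i" "i < n + L" | "n + L \<le> i" "Suc i \<le> n + 2 * L + 1"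
      | "n + 2 * L + 1 \<le> i"
      by linarith
    thus ?thesis
    proof cases
      case 1
      thus ?thesis unfolding Suc coeff_smult by (rule coeff_raise_op_alpha_poly_low[OF L])
    next
      case 2
      thus ?thesis unfolding Suc coeff_smult coeff_raise_op_Suc by (simp add: coeff_alpha_poly_mid)
    next
      case 3
      thus ?thesis unfolding Suc coeff_smult by (rule coeff_raise_op_alpha_poly_high[OF L])
    next
      case 4
      thus ?thesis unfolding Suc coeff_smult coeff_raise_op_Suc by (simp add: coeff_alpha_poly_top)
    qed
  qed
qed

lemma linear_mult_fourier_poly_1: "[:-1, 1:] * fourier_poly 1 n = alpha_poly 1 n"
proof -
  have "[:-1, 1:] * fourier_poly 1 n = ([:0, 1:] - 1) * (\<Sum>k<Suc n. [:0, 1:] ^ k)"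
    by (simp add: fourier_poly_def fourier_coeff_def monom_altdef lessThan_Suc_atMost one_pCons)
  also have "\<dots> = [:0, 1:] ^ Suc n - 1"
    by (rule power_diff_1_eq[symmetric])
  also have "\<dots> = monom 1 (Suc n) - monom 1 0"
    by (simp only: monom_altdef smult_1_left power_0)
  also have "\<dots> = alpha_poly 1 n"
    by (simp add: alpha_poly_def)
  finally show ?thesis .
qed

lemma fourier_poly_alpha_poly:
  assumes "lam \<ge> 1"
  shows "[:-1, 1:] ^ (2 * lam - 1) * fourier_poly lam n = smult (kappa lam n) (alpha_poly lam n)"
  using assms
proof (induction lam arbitrary: n rule: nat_induct_at_least)
  case base
  have "[:-1, 1:] ^ (2 * 1 - 1) = ([:-1, 1:] :: real poly)" by simp
  moreover have "kappa 1 n = 1" by (simp add: kappa_def)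
  ultimately show ?case by (simp only: linear_mult_fourier_poly_1 smult_1_left)
next
  case (Suc L)
  define m where "m = 2 * L - 2"
  define X1 where "X1 = ([:-1, 1:] :: real poly)"
  define Q where "Q = fourier_poly L (Suc n)"
  define F where "F = X1 ^ Suc m * Q"
  have m: "2 * L - 1 = Suc m" "2 * Suc L - 1 = Suc (Suc (Suc m))" "real (Suc m) = 2 * real L - 1"
    using Suc.hyps by (simp_all add: m_def of_nat_diff)
  have F: "F = smult (kappa L (Suc n)) (alpha_poly L (Suc n))"
    using Suc.IH[of "Suc n"] unfolding F_def Q_def X1_def m(1) .
  have dX: "pderiv X1 = 1" by (simp add: X1_def pderiv_pCons)
  have pF: "pderiv F = X1 ^ Suc m * pderiv Q + smult (real (Suc m)) (X1 ^ m * Q)"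
    unfolding F_def pderiv_mult pderiv_power_Suc dX by (simp add: algebra_simps)
  have e1: "X1 * pderiv F - smult (2 * real L - 1) F = X1 ^ Suc (Suc m) * pderiv Q"
    unfolding pF m(3)[symmetric] by (simp add: F_def algebra_simps)
  have e2: "X1 * F = X1 ^ Suc (Suc m) * Q" by (simp add: F_def)
  have "smult (real L) (X1 ^ (2 * Suc L - 1) * fourier_poly (Suc L) n)
      = X1 ^ Suc (Suc m) * smult (real L) (X1 * fourier_poly (Suc L) n)"
    unfolding m(2) by (simp add: algebra_simps)
  also have "\<dots> = X1 ^ Suc (Suc m) * (smult 2 (pCons 0 (pderiv Q)) - smult (real (Suc n)) Q)"
    unfolding X1_def Q_def fourier_poly_Suc_param ..
  also have "\<dots> = raise_op L n F"
    unfolding raise_op_def X1_def[symmetric] e1 e2 by (simp add: algebra_simps smult_diff_right)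
  also have "\<dots> = smult (kappa L (Suc n) * - (2 * real L + real n + 1)) (alpha_poly (Suc L) n)"
    unfolding F raise_op_smult raise_op_alpha_poly[OF Suc.hyps] smult_smult ..
  also have "kappa L (Suc n) * - (2 * real L + real n + 1) = real L * kappa (Suc L) n"
    using Suc.hyps kappa_Suc_param[of "L - 1" n] by (cases L) simp_all
  finally have "smult (real L) (X1 ^ (2 * Suc L - 1) * fourier_poly (Suc L) n)
      = smult (real L) (smult (kappa (Suc L) n) (alpha_poly (Suc L) n))"
    by (simp only: smult_smult)
  moreover have "real L \<noteq> 0" using Suc.hyps by simp
  ultimately show ?case unfolding X1_def by (rule smult_cancel[rotated])
qed

section \<open>Factorisation over the zeros\<close>

lemma map_poly_of_real_add:
  "map_poly of_real (p + q) = map_poly of_real p + (map_poly of_real q :: 'a::real_field poly)"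
  by (rule poly_eqI) (simp add: coeff_map_poly)

lemma map_poly_of_real_diff:
  "map_poly of_real (p - q) = map_poly of_real p - (map_poly of_real q :: 'a::real_field poly)"
  by (rule poly_eqI) (simp add: coeff_map_poly)

lemma map_poly_of_real_mult:
  "map_poly of_real (p * q) = map_poly of_real p * (map_poly of_real q :: 'a::real_field poly)"
  by (rule poly_eqI) (simp add: coeff_map_poly coeff_mult)

lemma map_poly_of_real_power:
  "map_poly of_real (p ^ k) = (map_poly of_real p :: 'a::real_field poly) ^ k"
  by (induction k) (simp_all add: map_poly_of_real_mult)

lemma map_poly_of_real_sum:
  "map_poly of_real (sum f A) = (\<Sum>x\<in>A. map_poly of_real (f x) :: 'a::real_field poly)"
  by (induction A rule: infinite_finite_induct) (simp_all add: map_poly_of_real_add)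

lemma poly_fourier_poly:
  "poly (map_poly of_real (fourier_poly lam n)) w =
     (\<Sum>k\<le>n. of_real (fourier_coeff lam n k) * (w :: 'a::real_field) ^ k)"
  by (simp add: fourier_poly_def map_poly_of_real_sum map_poly_monom poly_sum poly_monom)

lemma gegenbauer_cos_eq_fourier_poly:
  assumes "lam > 0"
  shows "complex_of_real (gegenbauer lam n (cos t)) =
         cis (- (real n * t)) * poly (map_poly of_real (fourier_poly lam n)) (cis (2 * t))"
  unfolding gegenbauer_cos_eq_cis_sum[OF assms] poly_fourier_poly sum_distrib_left
  by (rule sum.cong) (auto simp: Complex.DeMoivre cis_mult algebra_simps)

lemma gpoly_eq_alpha_poly:
  assumes "lam \<ge> 1"
  shows "gpoly lam n z = poly (map_poly of_real (alpha_poly lam n)) (z ^ 2)"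
proof -
  have "{0..lam - 1} = {..<lam}" using assms by auto
  moreover have "z ^ (2 * n + 2 * lam + 2 * v) - z ^ (2 * lam - 2 * v - 2)
      = (z ^ 2) ^ (n + lam + v) - (z ^ 2) ^ (lam - 1 - v)" if "v < lam" for v
    using that by (simp add: power_mult[symmetric] algebra_simps diff_mult_distrib2)
  ultimately show ?thesis
    unfolding gpoly_def alpha_poly_def
    by (simp add: map_poly_of_real_sum map_poly_smult map_poly_of_real_diff map_poly_monom poly_sum
        poly_monom)
qed

lemma poly_fourier_poly_alpha_poly:
  assumes "lam \<ge> 1"
  shows "(w - 1) ^ (2 * lam - 1) * poly (map_poly of_real (fourier_poly lam n)) w =
         of_real (kappa lam n) * poly (map_poly of_real (alpha_poly lam n)) (w :: 'a::real_field)"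
proof -
  have "poly (map_poly of_real ([:-1, 1:] ^ (2 * lam - 1) * fourier_poly lam n)) w =
        poly (map_poly of_real (smult (kappa lam n) (alpha_poly lam n))) w"
    by (simp only: fourier_poly_alpha_poly[OF assms])
  thus ?thesis
    by (simp add: map_poly_of_real_mult map_poly_of_real_power map_poly_smult map_poly_pCons)
qed

lemma poly_eq_smult_prod_roots:
  fixes p :: "'a::idom poly"
  assumes "finite S" "card S = degree p" "\<And>x. x \<in> S \<Longrightarrow> poly p x = 0"
  shows "p = smult (lead_coeff p) (\<Prod>x\<in>S. [:-x, 1:])"
  using assms
proof (induction S arbitrary: p rule: finite_induct)
  case empty
  thus ?case by (metis degree_0_id card.empty prod.empty smult_1_left smult_one mult.right_neutral)
next
  case (insert x S)
  obtain q where q: "p = [:-x, 1:] * q"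
    using insert.prems(2) by (metis insertI1 poly_eq_0_iff_dvd dvdE)
  have "p \<noteq> 0" using insert by auto
  hence "q \<noteq> 0" using q by auto
  hence "degree p = Suc (degree q)" unfolding q by (subst degree_mult_eq) auto
  moreover have "poly q y = 0" if "y \<in> S" for y
    using insert.prems(2)[of y] insert.hyps(2) that by (auto simp: q)
  ultimately have "q = smult (lead_coeff q) (\<Prod>x\<in>S. [:-x, 1:])"
    using insert by (intro insert.IH) auto
  moreover have "lead_coeff p = lead_coeff q"
    unfolding q lead_coeff_mult by (simp del: mult_pCons_left)
  ultimately have "p = [:-x, 1:] * smult (lead_coeff p) (\<Prod>x\<in>S. [:-x, 1:])"
    using q by simp
  thus ?case using insert.hyps by (simp add: mult.left_commute)
qed

lemma inj_on_cis: "inj_on cis {0..<2 * pi}"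
proof (rule inj_onI)
  fix a b assume ab: "a \<in> {0..<2 * pi}" "b \<in> {0..<2 * pi}" "cis a = cis b"
  have "cis (b - a) = 1" using ab(3) by (simp flip: cis_divide)
  hence "cos (b - a) = 1" by (metis cis.sel(1) one_complex.sel(1))
  then obtain k :: int where k: "b - a = real_of_int k * (2 * pi)"
    using cos_one_2pi_int by (auto simp: mult.assoc)
  have "\<bar>real_of_int k\<bar> * (2 * pi) < 1 * (2 * pi)"
    using ab(1,2) unfolding abs_mult[of _ "2 * pi", simplified, symmetric] k[symmetric] by auto
  hence "\<bar>real_of_int k\<bar> < 1" by (rule mult_right_less_imp_less) simp
  hence "k = 0" by linarith
  thus "a = b" using k by simp
qed

lemma fourier_poly_factor:
  assumes lam: "lam \<ge> 1" and t: "zeros_in_0_pi (\<lambda>x. gegenbauer lam n (cos x)) n t"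
  shows "poly (map_poly of_real (fourier_poly lam n)) w =
         complex_of_real (gegenbauer_weight lam n) * (\<Prod>i<n. w - cis (2 * t i))"
proof -
  define p where "p = (map_poly of_real (fourier_poly lam n) :: complex poly)"
  define r where "r i = cis (2 * t i)" for i
  have weight: "gegenbauer_weight lam n > 0" using lam by (intro gegenbauer_weight_pos) simp
  have coeff_p: "coeff p j = complex_of_real (if j \<le> n then fourier_coeff lam n j else 0)" for j
    by (simp add: p_def coeff_map_poly coeff_fourier_poly)
  have deg: "degree p = n"
    using weight by (intro antisym degree_le le_degree) (auto simp: coeff_p fourier_coeff_def)
  have lead: "lead_coeff p = complex_of_real (gegenbauer_weight lam n)"
    by (simp add: deg coeff_p fourier_coeff_def)
  have inj: "inj_on r {..<n}"
  proof (rule inj_onI)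
    fix i j assume ij: "i \<in> {..<n}" "j \<in> {..<n}" "r i = r j"
    have "2 * t i \<in> {0..<2 * pi}" "2 * t j \<in> {0..<2 * pi}"
      using t ij(1,2) by (auto simp: zeros_in_0_pi_def less_imp_le)
    hence "2 * t i = 2 * t j" using ij(3) by (intro inj_onD[OF inj_on_cis]) (simp_all add: r_def)
    hence "t i = t j" by simp
    moreover have "inj_on t {..<n}"
      using t by (simp add: zeros_in_0_pi_def strict_mono_on_imp_inj_on)
    ultimately show "i = j" using ij(1,2) by (simp add: inj_on_eq_iff)
  qed
  have roots: "poly p x = 0" if "x \<in> r ` {..<n}" for x
  proof -
    from that obtain i where i: "i < n" "x = r i" by blast
    have "gegenbauer lam n (cos (t i)) = 0" using t i by (simp add: zeros_in_0_pi_def)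
    thus ?thesis using gegenbauer_cos_eq_fourier_poly[of lam n "t i"] lam by (simp add: p_def r_def i)
  qed
  have "p = smult (lead_coeff p) (\<Prod>x\<in>r ` {..<n}. [:-x, 1:])"
    by (rule poly_eq_smult_prod_roots) (use inj deg roots in \<open>simp_all add: card_image\<close>)
  hence "poly p w = lead_coeff p * (\<Prod>x\<in>r ` {..<n}. poly [:-x, 1:] w)"
    by (metis poly_smult poly_prod)
  also have "(\<Prod>x\<in>r ` {..<n}. poly [:-x, 1:] w) = (\<Prod>i<n. w - r i)"
    using inj by (simp add: prod.reindex)
  finally show ?thesis unfolding lead by (simp add: p_def r_def)
qed

lemma gpoly_ratio_eq_prod:
  assumes lam: "lam \<ge> 1" and t: "zeros_in_0_pi (\<lambda>x. gegenbauer lam n (cos x)) n t"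
  shows "gpoly lam n z / gpoly lam n 0 = (1 - z ^ 2) ^ (2 * lam - 1) * (\<Prod>i<n. 1 - z ^ 2 / cis (2 * t i))"
proof -
  define c where "c = complex_of_real (gegenbauer_weight lam n) / complex_of_real (kappa lam n)"
  define A where "A y = (y ^ 2 - 1) ^ (2 * lam - 1) * (\<Prod>i<n. y ^ 2 - cis (2 * t i))" for y :: complex
  have kappa: "complex_of_real (kappa lam n) \<noteq> 0" by (simp add: kappa_def)
  have "c \<noteq> 0" using gegenbauer_weight_pos[of lam n] lam kappa by (simp add: c_def)
  have gpoly: "gpoly lam n y = c * A y" for y
  proof -
    have "complex_of_real (kappa lam n) * gpoly lam n y = complex_of_real (gegenbauer_weight lam n) * A y"
      unfolding gpoly_eq_alpha_poly[OF lam] poly_fourier_poly_alpha_poly[OF lam, symmetric]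
        fourier_poly_factor[OF lam t] A_def
      by (simp only: mult_ac)
    thus ?thesis using kappa by (simp add: c_def field_simps)
  qed
  have "gpoly lam n z / gpoly lam n 0 = A z / A 0"
    using \<open>c \<noteq> 0\<close> by (simp add: gpoly)
  also have "\<dots> = ((z ^ 2 - 1) ^ (2 * lam - 1) / (- 1) ^ (2 * lam - 1)) *
      ((\<Prod>i<n. z ^ 2 - cis (2 * t i)) / (\<Prod>i<n. - cis (2 * t i)))"
    unfolding A_def by (simp only: power_zero_numeral diff_0 times_divide_times_eq)
  also have "(z ^ 2 - 1) ^ (2 * lam - 1) / (- 1) ^ (2 * lam - 1) = (1 - z ^ 2) ^ (2 * lam - 1)"
    by (simp add: power_divide[symmetric])
  also have "(\<Prod>i<n. z ^ 2 - cis (2 * t i)) / (\<Prod>i<n. - cis (2 * t i))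
      = (\<Prod>i<n. (z ^ 2 - cis (2 * t i)) / (- cis (2 * t i)))"
    by (rule prod_dividef[symmetric])
  also have "\<dots> = (\<Prod>i<n. 1 - z ^ 2 / cis (2 * t i))"
    by (rule prod.cong) (auto simp: field_simps)
  finally show ?thesis .
qed

section \<open>Taylor coefficients of log(p(z)/p(0))\<close>

lemma has_field_derivative_prod_logderiv:
  fixes f :: "'a \<Rightarrow> 'b::real_normed_field \<Rightarrow> 'b"
  assumes "finite A" "\<And>i. i \<in> A \<Longrightarrow> (f i has_field_derivative f' i) (at z)" "\<And>i. i \<in> A \<Longrightarrow> f i z \<noteq> 0"
  shows "((\<lambda>z. \<Prod>i\<in>A. f i z) has_field_derivative (\<Prod>i\<in>A. f i z) * (\<Sum>i\<in>A. f' i / f i z)) (at z)"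
  using assms
proof (induction A rule: finite_induct)
  case (insert x A)
  have "((\<lambda>z. \<Prod>i\<in>A. f i z) has_field_derivative (\<Prod>i\<in>A. f i z) * (\<Sum>i\<in>A. f' i / f i z)) (at z)"
    using insert by simp
  from DERIV_mult[OF insert.prems(1)[OF insertI1] this]
  have "((\<lambda>z. f x z * (\<Prod>i\<in>A. f i z)) has_field_derivative
          f x z * ((\<Prod>i\<in>A. f i z) * (\<Sum>i\<in>A. f' i / f i z)) + f' x * (\<Prod>i\<in>A. f i z)) (at z)"
    by (simp add: algebra_simps)
  moreover have "f x z * ((\<Prod>i\<in>A. f i z) * (\<Sum>i\<in>A. f' i / f i z)) + f' x * (\<Prod>i\<in>A. f i z)
      = (f x z * (\<Prod>i\<in>A. f i z)) * (f' x / f x z + (\<Sum>i\<in>A. f' i / f i z))"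
    using insert.prems by (simp add: field_simps)
  ultimately show ?case using insert.hyps by simp
qed simp

definition fps_inverse_const_minus_X2 :: "'a::field \<Rightarrow> 'a fps" where
  "fps_inverse_const_minus_X2 c = Abs_fps (\<lambda>k. if even k then (1 / c) ^ (k div 2 + 1) else 0)"

lemma inverse_fps_const_minus_X2:
  assumes "c \<noteq> 0"
  shows "inverse (fps_const c - fps_X ^ 2) = fps_inverse_const_minus_X2 c"
proof (rule fps_inverse_unique, rule fps_ext)
  fix k
  show "fps_nth ((fps_const c - fps_X ^ 2) * fps_inverse_const_minus_X2 c) k = fps_nth 1 k"
  proof (cases "k \<ge> 2")
    case True
    then obtain i where k: "k = Suc (Suc i)" by (metis add_2_eq_Suc le_Suc_ex)
    have "fps_nth ((fps_const c - fps_X ^ 2) * fps_inverse_const_minus_X2 c) k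
        = c * fps_nth (fps_inverse_const_minus_X2 c) k - fps_nth (fps_inverse_const_minus_X2 c) i"
      by (simp add: k algebra_simps fps_X_power_mult_nth fps_X_power_mult_right_nth)
    also have "\<dots> = 0" using assms by (auto simp: fps_inverse_const_minus_X2_def k field_simps)
    finally show ?thesis using k by simp
  next
    case False
    hence "k = 0 \<or> k = 1" by auto
    thus ?thesis using assms by (auto simp: fps_inverse_const_minus_X2_def algebra_simps)
  qed
qed

lemma has_fps_expansion_logderiv_const_minus_square:
  fixes c :: complex
  assumes "c \<noteq> 0"
  shows "(\<lambda>z. -2 * z / (c - z ^ 2)) has_fps_expansion (fps_const (-2) * fps_X * fps_inverse_const_minus_X2 c)"
proof -
  have "(\<lambda>z. inverse (c - z ^ 2)) has_fps_expansion inverse (fps_const c - fps_X ^ 2)"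
    using assms
    by (intro has_fps_expansion_inverse fps_expansion_intros) (simp_all add: fps_sub_nth fps_X_power_nth)
  hence "(\<lambda>z. -2 * z * inverse (c - z ^ 2)) has_fps_expansion
           fps_const (-2) * fps_X * inverse (fps_const c - fps_X ^ 2)"
    by (intro has_fps_expansion_mult has_fps_expansion_fps_X has_fps_expansion_const)
  thus ?thesis by (simp add: inverse_fps_const_minus_X2[OF assms] divide_inverse)
qed

lemma fps_nth_logderiv_const_minus_square:
  assumes "m \<ge> 1"
  shows "fps_nth (fps_const (-2) * fps_X * fps_inverse_const_minus_X2 c) (2 * m - 1) = -2 * (1 / c) ^ m"
proof -
  obtain k where m: "m = Suc k" using assms by (cases m) auto
  hence "2 * m - 1 = Suc (2 * k)" by simp
  thus ?thesis
    using m by (simp add: fps_inverse_const_minus_X2_def mult.assoc fps_mult_left_const_nth field_simps)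
qed

lemma eventually_dist_1_lt_1:
  fixes f :: "complex \<Rightarrow> complex"
  assumes "isCont f 0" "f 0 = 1"
  shows "eventually (\<lambda>z. dist (f z) 1 < 1) (nhds 0)"
proof -
  have "eventually (\<lambda>z. dist (f z) 1 < 1) (at 0)"
    using assms by (intro tendstoD) (simp_all add: isCont_def)
  thus ?thesis using assms by (simp add: eventually_nhds_conv_at)
qed

lemma dist_1_lt_1_not_nonpos_Reals: "dist w 1 < 1 \<Longrightarrow> (w::complex) \<notin> \<real>\<^sub>\<le>\<^sub>0"
  using abs_Re_le_cmod[of "w - 1"] by (auto simp: complex_nonpos_Reals_iff dist_norm)

lemma has_field_derivative_Ln_prod:
  fixes c :: "nat \<Rightarrow> complex" and n N :: nat
  defines "R \<equiv> \<lambda>z. (1 - z ^ 2) ^ N * (\<Prod>i<n. 1 - z ^ 2 / c i)"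
  assumes c: "\<And>i. i < n \<Longrightarrow> c i \<noteq> 0" and R: "R z \<notin> \<real>\<^sub>\<le>\<^sub>0"
    and f1: "1 - z ^ 2 \<noteq> 0" and fi: "\<And>i. i < n \<Longrightarrow> 1 - z ^ 2 / c i \<noteq> 0"
  shows "((\<lambda>z. Ln (R z)) has_field_derivative
           of_nat N * (-2 * z / (1 - z ^ 2)) + (\<Sum>i<n. -2 * z / (c i - z ^ 2))) (at z)"
proof -
  have P0: "(\<Prod>i<n. 1 - z ^ 2 / c i) \<noteq> 0" using fi by simp
  have Q0: "(1 - z ^ 2) ^ N \<noteq> 0" using f1 by simp
  have dR: "(R has_field_derivative
      (of_nat N * (1 - z ^ 2) ^ (N - 1) * (- 2 * z)) * (\<Prod>i<n. 1 - z ^ 2 / c i)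
      + (1 - z ^ 2) ^ N * ((\<Prod>i<n. 1 - z ^ 2 / c i) * (\<Sum>i<n. (- 2 * z / c i) / (1 - z ^ 2 / c i))))
      (at z)"
    unfolding R_def using c fi
    by (auto intro!: derivative_eq_intros has_field_derivative_prod_logderiv)
  have "((\<lambda>z. Ln (R z)) has_field_derivative
      inverse (R z) * ((of_nat N * (1 - z ^ 2) ^ (N - 1) * (- 2 * z)) * (\<Prod>i<n. 1 - z ^ 2 / c i)
      + (1 - z ^ 2) ^ N * ((\<Prod>i<n. 1 - z ^ 2 / c i) * (\<Sum>i<n. (- 2 * z / c i) / (1 - z ^ 2 / c i)))))
      (at z)"
    using DERIV_chain2[OF has_field_derivative_Ln[OF R] dR] by (simp add: mult.commute)
  moreover have "(\<Sum>i<n. (- 2 * z / c i) / (1 - z ^ 2 / c i)) = (\<Sum>i<n. -2 * z / (c i - z ^ 2))"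
  proof (rule sum.cong)
    fix i assume "i \<in> {..<n}"
    with c fi have "c i \<noteq> 0" "1 - z ^ 2 / c i \<noteq> 0" by auto
    moreover from this have "c i - z ^ 2 \<noteq> 0" by (simp add: field_simps)
    ultimately show "(- 2 * z / c i) / (1 - z ^ 2 / c i) = -2 * z / (c i - z ^ 2)"
      by (simp add: field_simps)
  qed simp
  moreover have "of_nat N * (1 - z ^ 2) ^ (N - 1) * (- 2 * z)
      = (1 - z ^ 2) ^ N * (of_nat N * (-2 * z / (1 - z ^ 2)))"
    using f1 by (cases N) (simp_all add: field_simps)
  ultimately have "((\<lambda>z. Ln (R z)) has_field_derivative
      inverse (R z) * ((1 - z ^ 2) ^ N * (of_nat N * (-2 * z / (1 - z ^ 2))) * (\<Prod>i<n. 1 - z ^ 2 / c i)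
      + (1 - z ^ 2) ^ N * ((\<Prod>i<n. 1 - z ^ 2 / c i) * (\<Sum>i<n. -2 * z / (c i - z ^ 2))))) (at z)"
    by simp
  moreover have "inverse (R z) * ((1 - z ^ 2) ^ N * (of_nat N * (-2 * z / (1 - z ^ 2)))
      * (\<Prod>i<n. 1 - z ^ 2 / c i)
      + (1 - z ^ 2) ^ N * ((\<Prod>i<n. 1 - z ^ 2 / c i) * (\<Sum>i<n. -2 * z / (c i - z ^ 2))))
      = of_nat N * (-2 * z / (1 - z ^ 2)) + (\<Sum>i<n. -2 * z / (c i - z ^ 2))"
    using P0 Q0 f1 by (simp add: R_def field_simps)
  ultimately show ?thesis by simp
qed

lemma eventually_deriv_Ln_prod_eq:
  fixes c :: "nat \<Rightarrow> complex" and N :: nat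
  assumes c: "\<And>i. i < n \<Longrightarrow> c i \<noteq> 0"
  defines "R \<equiv> \<lambda>z. (1 - z ^ 2) ^ N * (\<Prod>i<n. 1 - z ^ 2 / c i)"
  shows "eventually (\<lambda>z. deriv (\<lambda>z. Ln (R z)) z =
           of_nat N * (-2 * z / (1 - z ^ 2)) + (\<Sum>i<n. -2 * z / (c i - z ^ 2))) (nhds 0)"
proof -
  have "eventually (\<lambda>z. dist (R z) 1 < 1) (nhds 0)"
    by (rule eventually_dist_1_lt_1) (use c in \<open>auto simp: R_def intro!: continuous_intros\<close>)
  moreover have "eventually (\<lambda>z. dist (1 - z ^ 2) 1 < 1) (nhds (0::complex))"
    by (rule eventually_dist_1_lt_1) (auto intro!: continuous_intros)
  moreover have "eventually (\<lambda>z. \<forall>i\<in>{..<n}. dist (1 - z ^ 2 / c i) 1 < 1) (nhds 0)"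
    using c by (intro eventually_ball_finite ballI eventually_dist_1_lt_1) (auto intro!: continuous_intros)
  ultimately show ?thesis
  proof eventually_elim
    case (elim z)
    have "1 - z ^ 2 / c i \<noteq> 0" if "i < n" for i
    proof
      assume "1 - z ^ 2 / c i = 0"
      moreover have "dist (1 - z ^ 2 / c i) 1 < 1" using elim(3) that by blast
      ultimately show False by simp
    qed
    moreover have "1 - z ^ 2 \<noteq> 0" using elim(2) by auto
    ultimately show ?case
      using c dist_1_lt_1_not_nonpos_Reals[OF elim(1)] unfolding R_def
      by (intro DERIV_imp_deriv has_field_derivative_Ln_prod) auto
  qed
qed

(* The logarithmic derivative is a sum of terms -2z/(c - z^2) = -2 \<Sum>_k z^{2k+1}/c^{k+1}. *)
lemma higher_deriv_Ln_prod:
  fixes c :: "nat \<Rightarrow> complex"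
  assumes c: "\<And>i. i < n \<Longrightarrow> c i \<noteq> 0" and m: "m \<ge> 1"
  shows "(deriv ^^ (2 * m)) (\<lambda>z. Ln ((1 - z ^ 2) ^ N * (\<Prod>i<n. 1 - z ^ 2 / c i))) 0
       = fact (2 * m - 1) * (- 2 * of_nat N - 2 * (\<Sum>i<n. (1 / c i) ^ m))"
proof -
  define h where "h a = (\<lambda>z::complex. -2 * z / (a - z ^ 2))" for a
  define H where "H a = fps_const (-2) * fps_X * fps_inverse_const_minus_X2 (a :: complex)" for a
  define D where "D z = of_nat N * h 1 z + (\<Sum>i<n. h (c i) z)" for z
  define G where "G = fps_const (of_nat N) * H 1 + (\<Sum>i<n. H (c i))"
  have h: "h a has_fps_expansion H a" if "a \<noteq> 0" for a
    unfolding h_def H_def using that by (rule has_fps_expansion_logderiv_const_minus_square)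
  have "D has_fps_expansion G"
    unfolding D_def[abs_def] G_def
    by (intro has_fps_expansion_add has_fps_expansion_sum has_fps_expansion_cmult_left h)
      (use c in simp_all)
  hence "fps_nth G (2 * m - 1) = (deriv ^^ (2 * m - 1)) D 0 / fact (2 * m - 1)"
    by (rule fps_nth_fps_expansion)
  hence taylor: "(deriv ^^ (2 * m - 1)) D 0 = fact (2 * m - 1) * fps_nth G (2 * m - 1)"
    by simp
  have coeff: "fps_nth G (2 * m - 1) = of_nat N * (-2 * (1 / 1) ^ m) + (\<Sum>i<n. -2 * (1 / c i) ^ m)"
    unfolding G_def H_def using fps_nth_logderiv_const_minus_square[OF m, where 'a = complex]
    by (simp add: fps_sum_nth)
  have "(deriv ^^ Suc k) f 0 = (deriv ^^ k) (deriv f) 0" for k and f :: "complex \<Rightarrow> complex"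
    by (simp only: funpow_Suc_right comp_apply)
  from this[of "2 * m - 1"] m
  have "(deriv ^^ (2 * m)) (\<lambda>z. Ln ((1 - z ^ 2) ^ N * (\<Prod>i<n. 1 - z ^ 2 / c i))) 0
      = (deriv ^^ (2 * m - 1)) (deriv (\<lambda>z. Ln ((1 - z ^ 2) ^ N * (\<Prod>i<n. 1 - z ^ 2 / c i)))) 0"
    by (simp add: Suc_diff_Suc numeral_2_eq_2)
  also have "\<dots> = (deriv ^^ (2 * m - 1)) D 0"
    using eventually_deriv_Ln_prod_eq[where c = c and n = n and N = N, OF c] unfolding D_def h_def
    by (rule higher_deriv_cong_ev) simp_all
  finally show ?thesis
    unfolding taylor coeff by (simp add: sum_distrib_left sum_negf algebra_simps)
qed

section \<open>Fourier coefficients of log(4 sin^2)\<close>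

definition log_sin_sq :: "real \<Rightarrow> real" where
  "log_sin_sq u = ln (4 * (sin u) ^ 2)"

lemma log_sin_sq_0 [simp]: "log_sin_sq 0 = 0" and log_sin_sq_pi [simp]: "log_sin_sq pi = 0"
  by (simp_all add: log_sin_sq_def)

lemma log_sin_sq_add_pi: "log_sin_sq (u + pi) = log_sin_sq u"
  by (simp add: log_sin_sq_def sin_add)

lemma log_sin_sq_has_real_derivative:
  assumes "sin x \<noteq> 0"
  shows "(log_sin_sq has_real_derivative 2 * cos x / sin x) (at x)"
proof -
  have "4 * (sin x) ^ 2 > 0" using assms by simp
  hence "(log_sin_sq has_real_derivative (4 * (2 * sin x * cos x)) / (4 * (sin x) ^ 2)) (at x)"
    unfolding log_sin_sq_def using assms by (auto intro!: derivative_eq_intros simp: power2_eq_square)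
  moreover have "(4 * (2 * sin x * cos x)) / (4 * (sin x) ^ 2) = 2 * cos x / sin x"
    using assms by (simp add: power2_eq_square field_simps)
  ultimately show ?thesis by simp
qed

lemma isCont_sin_mult_log_sin_sq: "isCont (\<lambda>u. sin u * log_sin_sq u) x"
proof -
  have h: "isCont (\<lambda>s::real. s * ln (4 * s ^ 2)) s" for s
  proof (cases "s = 0")
    case True
    have "((\<lambda>s::real. s * ln (4 * s ^ 2)) \<longlongrightarrow> 0) (at_right 0)"
         "((\<lambda>s::real. s * ln (4 * s ^ 2)) \<longlongrightarrow> 0) (at_left 0)"
      by real_asymp+
    thus ?thesis using True by (simp add: isCont_def filterlim_split_at)
  next
    case False
    thus ?thesis by (intro continuous_intros) auto
  qed
  have "(\<lambda>u. sin u * log_sin_sq u) = (\<lambda>u. (\<lambda>s. s * ln (4 * s ^ 2)) (sin u))"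
    by (simp add: log_sin_sq_def)
  thus ?thesis by (simp only:) (rule isCont_o2[OF _ h], intro continuous_intros)
qed

lemma sin_even_multiple_eq: "sin (2 * real m * u) = sin u * (2 * (\<Sum>j<m. cos ((2 * real j + 1) * u)))"
proof (induction m)
  case (Suc m)
  have "sin (2 * real (Suc m) * u) = sin ((2 * real m + 1) * u + u)" by (simp add: algebra_simps)
  also have "\<dots> = sin ((2 * real m + 1) * u - u) + 2 * sin u * cos ((2 * real m + 1) * u)"
    by (simp add: sin_add sin_diff)
  also have "sin ((2 * real m + 1) * u - u) = sin (2 * real m * u)" by (simp add: algebra_simps)
  finally show ?case using Suc by (simp add: algebra_simps)
qed simp

lemma one_minus_cos_even_multiple_eq:
  "1 - cos (2 * real m * u) = sin u * (2 * (\<Sum>j<m. sin ((2 * real j + 1) * u)))"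
proof (induction m)
  case (Suc m)
  have "cos (2 * real (Suc m) * u) = cos ((2 * real m + 1) * u + u)" by (simp add: algebra_simps)
  also have "\<dots> = cos ((2 * real m + 1) * u - u) - 2 * sin u * sin ((2 * real m + 1) * u)"
    by (simp add: cos_add cos_diff)
  also have "cos ((2 * real m + 1) * u - u) = cos (2 * real m * u)" by (simp add: algebra_simps)
  finally show ?case using Suc by (simp add: algebra_simps)
qed simp

lemma has_integral_cos_even_multiple:
  "((\<lambda>u. cos (2 * real k * u)) has_integral (if k = 0 then pi else 0)) {0..pi}"
proof (cases "k = 0")
  case False
  have "((\<lambda>u. cos (2 * real k * u)) has_integral
         (sin (2 * real k * pi) / (2 * real k) - sin (2 * real k * 0) / (2 * real k))) {0..pi}"
  proof (rule fundamental_theorem_of_calculus)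
    fix x :: real
    show "((\<lambda>u. sin (2 * real k * u) / (2 * real k)) has_vector_derivative cos (2 * real k * x))
            (at x within {0..pi})"
      unfolding has_real_derivative_iff_has_vector_derivative[symmetric]
      using False by (auto intro!: derivative_eq_intros)
  qed simp
  moreover have "sin (2 * real k * pi) = 0"
    using sin_npi[of "2 * k"] by (simp add: mult.assoc)
  ultimately show ?thesis using False by simp
qed (use has_integral_const_real[of "1::real" 0 pi] in simp)

lemma has_integral_sin_even_multiple: "((\<lambda>u. sin (2 * real k * u)) has_integral 0) {0..pi}"
proof (cases "k = 0")
  case False
  have "((\<lambda>u. sin (2 * real k * u)) has_integral
         (- cos (2 * real k * pi) / (2 * real k) - (- cos (2 * real k * 0) / (2 * real k)))) {0..pi}"
  proof (rule fundamental_theorem_of_calculus)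
    fix x :: real
    show "((\<lambda>u. - cos (2 * real k * u) / (2 * real k)) has_vector_derivative sin (2 * real k * x))
            (at x within {0..pi})"
      unfolding has_real_derivative_iff_has_vector_derivative[symmetric]
      using False by (auto intro!: derivative_eq_intros)
  qed simp
  moreover have "cos (2 * real k * pi) = 1"
    using cos_npi[of "2 * k"] by (simp add: mult.assoc)
  ultimately show ?thesis by simp
qed simp

(* Integration by parts against g = sin \<cdot> p: the boundary terms g log_sin_sq = p \<cdot> (sin log_sin_sq)
   vanish at 0 and \<pi>, and g \<cdot> log_sin_sq' = 2 cos \<cdot> p has no singularity. *)
lemma has_integral_log_sin_sq_by_parts:
  assumes g: "\<And>x. (g has_real_derivative g' x) (at x)"
    and g_eq: "\<And>x. g x = sin x * p x" and p: "continuous_on {0..pi} p"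
    and J: "((\<lambda>x. 2 * cos x * p x) has_integral J) {0..pi}"
  shows "((\<lambda>x. g' x * log_sin_sq x) has_integral - J) {0..pi}"
proof -
  define Phi where "Phi x = g x * log_sin_sq x" for x
  have Phi_eq: "Phi = (\<lambda>x. p x * (sin x * log_sin_sq x))"
    by (auto simp: Phi_def g_eq)
  have "continuous_on {0..pi} Phi"
    unfolding Phi_eq
    by (intro continuous_on_mult p continuous_at_imp_continuous_on ballI isCont_sin_mult_log_sin_sq)
  moreover have "(Phi has_vector_derivative (g' x * log_sin_sq x + 2 * cos x * p x)) (at x)"
    if "x \<in> {0<..<pi}" for x
  proof -
    have sx: "sin x > 0" using that by (intro sin_gt_zero) auto
    have "(Phi has_real_derivative (g' x * log_sin_sq x + g x * (2 * cos x / sin x))) (at x)"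
      unfolding Phi_def[abs_def] using sx
      by (auto intro!: derivative_eq_intros g log_sin_sq_has_real_derivative)
    moreover have "g x * (2 * cos x / sin x) = 2 * cos x * p x"
      using sx by (simp add: g_eq field_simps)
    ultimately show ?thesis by (simp add: has_real_derivative_iff_has_vector_derivative)
  qed
  ultimately have "((\<lambda>x. g' x * log_sin_sq x + 2 * cos x * p x) has_integral (Phi pi - Phi 0)) {0..pi}"
    by (intro fundamental_theorem_of_calculus_interior) auto
  hence "((\<lambda>x. g' x * log_sin_sq x + 2 * cos x * p x) has_integral 0) {0..pi}"
    by (simp add: Phi_def)
  from has_integral_diff[OF this J] show ?thesis by simp
qed

lemma has_integral_cos_mult_log_sin_sq:
  assumes m: "m \<ge> 1"
  shows "((\<lambda>u. cos (2 * real m * u) * log_sin_sq u) has_integral (- pi / real m)) {0..pi}"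
proof -
  have g: "((\<lambda>x. sin (2 * real m * x)) has_real_derivative 2 * real m * cos (2 * real m * x)) (at x)" for x
    by (auto intro!: derivative_eq_intros)
  have "2 * cos x * (2 * (\<Sum>j<m. cos ((2 * real j + 1) * x)))
      = (\<Sum>j<m. 2 * (cos (2 * real (Suc j) * x) + cos (2 * real j * x)))" for x
  proof -
    have "cos (a + x) + cos (a - x) = 2 * cos x * cos a" for a by (simp add: cos_add cos_diff)
    from this[of "(2 * real j + 1) * x" for j] show ?thesis
      by (simp add: sum_distrib_left algebra_simps)
  qed
  moreover have "((\<lambda>x. \<Sum>j<m. 2 * (cos (2 * real (Suc j) * x) + cos (2 * real j * x))) has_integral
         (\<Sum>j<m. 2 * ((if Suc j = 0 then pi else 0) + (if j = 0 then pi else 0)))) {0..pi}"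
    by (intro has_integral_sum has_integral_mult_right has_integral_add has_integral_cos_even_multiple) auto
  moreover have "(\<Sum>j<m. 2 * ((if Suc j = 0 then pi else 0) + (if j = 0 then pi else (0::real))))
      = (\<Sum>j<m. if j = 0 then 2 * pi else 0)"
    by (rule sum.cong) auto
  moreover have "\<dots> = 2 * pi" using m by (simp add: sum.delta)
  ultimately have "((\<lambda>x. 2 * cos x * (2 * (\<Sum>j<m. cos ((2 * real j + 1) * x)))) has_integral 2 * pi) {0..pi}"
    by simp
  hence "((\<lambda>x. 2 * real m * cos (2 * real m * x) * log_sin_sq x) has_integral - (2 * pi)) {0..pi}"
    by (rule has_integral_log_sin_sq_by_parts[OF g sin_even_multiple_eq, rotated]) (intro continuous_intros)
  from has_integral_mult_right[OF this, of "1 / (2 * real m)"] show ?thesis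
    using m by (simp add: field_simps)
qed

lemma has_integral_sin_mult_log_sin_sq:
  "((\<lambda>u. sin (2 * real m * u) * log_sin_sq u) has_integral 0) {0..pi}"
proof (cases "m = 0")
  case False
  have g: "((\<lambda>x. 1 - cos (2 * real m * x)) has_real_derivative 2 * real m * sin (2 * real m * x)) (at x)"
    for x
    by (auto intro!: derivative_eq_intros)
  have "2 * cos x * (2 * (\<Sum>j<m. sin ((2 * real j + 1) * x)))
      = (\<Sum>j<m. 2 * (sin (2 * real (Suc j) * x) + sin (2 * real j * x)))" for x
  proof -
    have "sin (a + x) + sin (a - x) = 2 * cos x * sin a" for a by (simp add: sin_add sin_diff)
    from this[of "(2 * real j + 1) * x" for j] show ?thesis
      by (simp add: sum_distrib_left algebra_simps)
  qed
  moreover have "((\<lambda>x. \<Sum>j<m. 2 * (sin (2 * real (Suc j) * x) + sin (2 * real j * x))) has_integral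
         (\<Sum>j<m. 2 * (0 + 0))) {0..pi}"
    by (intro has_integral_sum has_integral_mult_right has_integral_add has_integral_sin_even_multiple) auto
  ultimately have "((\<lambda>x. 2 * cos x * (2 * (\<Sum>j<m. sin ((2 * real j + 1) * x)))) has_integral 0) {0..pi}"
    by simp
  hence "((\<lambda>x. 2 * real m * sin (2 * real m * x) * log_sin_sq x) has_integral - 0) {0..pi}"
    by (rule has_integral_log_sin_sq_by_parts[OF g one_minus_cos_even_multiple_eq, rotated])
      (intro continuous_intros)
  from has_integral_mult_right[OF this, of "1 / (2 * real m)"] show ?thesis
    using False by (simp add: field_simps)
qed simp

lemma log_sin_sq_integrable: "log_sin_sq integrable_on {0..pi}"
proof -
  have "continuous_on {0..pi} (\<lambda>x. (1 - cos (2 * real 1 * x)) * log_sin_sq x)"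
    unfolding one_minus_cos_even_multiple_eq
    by (simp add: mult.assoc)
      (intro continuous_on_mult continuous_intros continuous_at_imp_continuous_on ballI
        isCont_sin_mult_log_sin_sq)
  hence "(\<lambda>x. (1 - cos (2 * real 1 * x)) * log_sin_sq x) integrable_on {0..pi}"
    by (rule integrable_continuous_real)
  moreover have "(\<lambda>x. cos (2 * real 1 * x) * log_sin_sq x) integrable_on {0..pi}"
    using has_integral_cos_mult_log_sin_sq[of 1] by blast
  ultimately have "(\<lambda>x. (1 - cos (2 * real 1 * x)) * log_sin_sq x + cos (2 * real 1 * x) * log_sin_sq x)
      integrable_on {0..pi}"
    by (rule integrable_add)
  thus ?thesis by (simp add: algebra_simps)
qed

lemma log_sin_sq_double:
  assumes "0 < x" "x < pi / 2"
  shows "log_sin_sq (2 * x) = log_sin_sq x + log_sin_sq (x + pi / 2)"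
proof -
  have "sin x > 0" "cos x > 0" using assms by (auto intro!: sin_gt_zero cos_gt_zero)
  have "log_sin_sq (2 * x) = ln (4 * (2 * sin x * cos x) ^ 2)"
    by (simp only: log_sin_sq_def sin_double)
  also have "4 * (2 * sin x * cos x) ^ 2 = (4 * (sin x) ^ 2) * (4 * (cos x) ^ 2)"
    by (simp add: power_mult_distrib)
  also have "ln ((4 * (sin x) ^ 2) * (4 * (cos x) ^ 2)) = ln (4 * (sin x) ^ 2) + ln (4 * (cos x) ^ 2)"
    using \<open>sin x > 0\<close> \<open>cos x > 0\<close> by (intro ln_mult_pos) simp_all
  finally show ?thesis by (simp add: log_sin_sq_def sin_add)
qed

(* Doubling: I = \<integral>_0^\<pi> log_sin_sq satisfies I = I/2 by log_sin_sq_double and periodicity. *)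
lemma has_integral_log_sin_sq: "(log_sin_sq has_integral 0) {0..pi}"
proof -
  define I where "I = integral {0..pi} log_sin_sq"
  have hI: "(log_sin_sq has_integral I) {0..pi}"
    unfolding I_def by (rule integrable_integral[OF log_sin_sq_integrable])
  have int_sub: "log_sin_sq integrable_on {a..b}" if "0 \<le> a" "b \<le> pi" for a b
    using that by (intro integrable_subinterval_real[OF log_sin_sq_integrable]) auto
  define A where "A = integral {0..pi/2} log_sin_sq"
  define B where "B = integral {pi/2..pi} log_sin_sq"
  have hA: "(log_sin_sq has_integral A) {0..pi/2}" and hB: "(log_sin_sq has_integral B) {pi/2..pi}"
    unfolding A_def B_def by (auto intro!: integrable_integral int_sub)
  have "(log_sin_sq has_integral (A + B)) {0..pi}" by (rule has_integral_combine[OF _ _ hA hB]) auto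
  hence IAB: "I = A + B" using hI has_integral_unique by blast
  have "((\<lambda>x. log_sin_sq (x + pi/2)) has_integral B) {0..pi/2}"
    using has_integral_shift_real_ivl[OF hB, of "pi/2"] by simp
  from has_integral_add[OF hA this]
  have "((\<lambda>x. log_sin_sq (2 * x)) has_integral (A + B)) {0..pi/2}"
    by (rule has_integral_spike_finite[where S = "{0, pi/2}", rotated 2]) (auto simp: log_sin_sq_double)
  moreover have "((\<lambda>x. log_sin_sq (2 * x)) has_integral I / 2) {0..pi/2}"
  proof -
    have "(\<lambda>x. x / 2) ` {0..pi} = {0..pi/2}"
      by (auto simp: image_iff intro!: bexI[of _ "2 * x" for x])
    with has_integral_stretch_real[OF hI, of 2] show ?thesis by simp
  qed
  ultimately have "I / 2 = A + B" using has_integral_unique by blast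
  hence "I = 0" using IAB by simp
  thus ?thesis using hI by simp
qed

lemma has_integral_shift_periodic:
  fixes g :: "real \<Rightarrow> real"
  assumes per: "\<And>u. g (u + a) = g u" and hg: "(g has_integral J) {0..a}" and t: "0 \<le> t" "t \<le> a"
  shows "((\<lambda>x. g (x - t)) has_integral J) {0..a}"
proof -
  have ig: "g integrable_on {c..d}" if "0 \<le> c" "d \<le> a" for c d
    using that by (intro integrable_subinterval_real[OF has_integral_integrable[OF hg]]) auto
  define J1 where "J1 = integral {0..a - t} g"
  define J2 where "J2 = integral {a - t..a} g"
  have h1: "(g has_integral J1) {0..a - t}" and h2: "(g has_integral J2) {a - t..a}"
    unfolding J1_def J2_def using t by (auto intro!: integrable_integral ig)
  have "(g has_integral (J1 + J2)) {0..a}" by (rule has_integral_combine[OF _ _ h1 h2]) (use t in auto)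
  hence J: "J = J1 + J2" using hg has_integral_unique by blast
  have "((\<lambda>x. g (x - t)) has_integral J1) {t..a}"
    using has_integral_shift_real_ivl[OF h1, of "- t"] by simp
  moreover have "((\<lambda>x. g (x - t)) has_integral J2) {0..t}"
  proof -
    have "g (x + (a - t)) = g (x - t)" for x
      using per[of "x - t"] by (simp add: algebra_simps)
    with has_integral_shift_real_ivl[OF h2, of "a - t"] show ?thesis by simp
  qed
  ultimately have "((\<lambda>x. g (x - t)) has_integral (J2 + J1)) {0..a}"
    by (intro has_integral_combine[of 0 t a]) (use t in auto)
  thus ?thesis using J by (simp add: add.commute)
qed

lemma has_integral_cos_mult_log_sin_sq_shift:
  assumes t: "0 \<le> t" "t \<le> pi"
  shows "((\<lambda>x. cos (2 * real m * x) * log_sin_sq (x - t)) has_integral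
          (if m = 0 then 0 else - pi * cos (2 * real m * t) / real m)) {0..pi}"
proof -
  define g where "g u = cos (2 * real m * (u + t)) * log_sin_sq u" for u
  have per: "g (u + pi) = g u" for u
  proof -
    have "cos (2 * real m * (u + pi + t)) = cos (2 * real m * (u + t) + real (2 * m) * pi)"
      by (simp add: algebra_simps)
    also have "\<dots> = cos (2 * real m * (u + t))" by (simp add: cos_add sin_npi cos_npi)
    finally show ?thesis by (simp add: g_def log_sin_sq_add_pi add.assoc[symmetric])
  qed
  have "(g has_integral (if m = 0 then 0 else - pi * cos (2 * real m * t) / real m)) {0..pi}"
  proof (cases "m = 0")
    case True
    thus ?thesis using has_integral_log_sin_sq by (simp add: g_def[abs_def])
  next
    case False
    have "g = (\<lambda>u. cos (2 * real m * t) * (cos (2 * real m * u) * log_sin_sq u)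
                   - sin (2 * real m * t) * (sin (2 * real m * u) * log_sin_sq u))"
      by (auto simp: g_def cos_add algebra_simps)
    moreover have "((\<lambda>u. cos (2 * real m * t) * (cos (2 * real m * u) * log_sin_sq u)
                   - sin (2 * real m * t) * (sin (2 * real m * u) * log_sin_sq u))
          has_integral (cos (2 * real m * t) * (- pi / real m) - sin (2 * real m * t) * 0)) {0..pi}"
      using False
      by (intro has_integral_diff has_integral_mult_right has_integral_cos_mult_log_sin_sq
          has_integral_sin_mult_log_sin_sq) simp
    moreover have "cos (2 * real m * t) * (- pi / real m) - sin (2 * real m * t) * 0
        = - pi * cos (2 * real m * t) / real m"
      by simp
    ultimately show ?thesis using False by (simp only: if_False)
  qed
  from has_integral_shift_periodic[OF per this t] show ?thesis by (simp add: g_def)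
qed

section \<open>The integrals I_{m,n}\<close>

lemma norm_cis_double_diff_sq: "cmod (cis (2 * x) - cis (2 * y)) ^ 2 = 4 * (sin (x - y)) ^ 2"
proof -
  have "cmod (cis (2 * x) - cis (2 * y)) ^ 2 = (cos (2 * x) - cos (2 * y)) ^ 2 + (sin (2 * x) - sin (2 * y)) ^ 2"
    by (simp add: cmod_power2)
  also have "\<dots> = 2 - 2 * (cos (2 * x) * cos (2 * y) + sin (2 * x) * sin (2 * y))"
    using sin_cos_squared_add[of "2 * x"] sin_cos_squared_add[of "2 * y"]
    by (simp add: power2_eq_square algebra_simps)
  also have "cos (2 * x) * cos (2 * y) + sin (2 * x) * sin (2 * y) = cos (2 * (x - y))"
    by (simp add: cos_diff algebra_simps)
  also have "cos (2 * (x - y)) = 1 - 2 * (sin (x - y)) ^ 2" by (rule cos_double_sin)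
  finally show ?thesis by simp
qed

lemma ln_gegenbauer_sq_eq_sum:
  assumes lam: "lam \<ge> 1" and t: "zeros_in_0_pi (\<lambda>x. gegenbauer lam n (cos x)) n t"
    and th: "th \<in> {0..pi} - t ` {..<n}"
  shows "ln ((gegenbauer lam n (cos th)) ^ 2) =
         2 * ln (gegenbauer_weight lam n) + (\<Sum>i<n. log_sin_sq (th - t i))"
proof -
  have weight: "gegenbauer_weight lam n > 0" using lam by (intro gegenbauer_weight_pos) simp
  have "cmod (complex_of_real (gegenbauer lam n (cos th)))
      = cmod (poly (map_poly of_real (fourier_poly lam n)) (cis (2 * th)))"
    using gegenbauer_cos_eq_fourier_poly[of lam n th] lam by (simp add: norm_mult)
  hence "(gegenbauer lam n (cos th)) ^ 2 = cmod (poly (map_poly of_real (fourier_poly lam n)) (cis (2 * th))) ^ 2"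
    by (metis norm_of_real power2_abs)
  also have "\<dots> = (gegenbauer_weight lam n) ^ 2 * (\<Prod>i<n. 4 * (sin (th - t i)) ^ 2)"
    unfolding fourier_poly_factor[OF lam t] norm_mult prod_norm[symmetric] power_mult_distrib
      prod_power_distrib norm_cis_double_diff_sq
    using weight by simp
  finally have sq: "(gegenbauer lam n (cos th)) ^ 2 = (gegenbauer_weight lam n) ^ 2 * (\<Prod>i<n. 4 * (sin (th - t i)) ^ 2)" .
  have pos: "4 * (sin (th - t i)) ^ 2 > 0" if "i < n" for i
  proof -
    have "th \<noteq> t i" "- pi < th - t i" "th - t i < pi"
      using th t that by (auto simp: zeros_in_0_pi_def)
    hence "sin (th - t i) \<noteq> 0" using sin_eq_0_pi[of "th - t i"] by auto
    thus ?thesis by simp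
  qed
  have "ln ((gegenbauer lam n (cos th)) ^ 2)
      = ln ((gegenbauer_weight lam n) ^ 2) + ln (\<Prod>i<n. 4 * (sin (th - t i)) ^ 2)"
    unfolding sq using weight pos by (intro ln_mult_pos) (auto intro!: prod_pos)
  also have "ln ((gegenbauer_weight lam n) ^ 2) = 2 * ln (gegenbauer_weight lam n)"
    using weight by (simp add: ln_realpow)
  also have "ln (\<Prod>i<n. 4 * (sin (th - t i)) ^ 2) = (\<Sum>i<n. log_sin_sq (th - t i))"
    using pos by (subst ln_prod) (auto simp: log_sin_sq_def)
  finally show ?thesis .
qed

lemma has_integral_cos_mult_ln_gegenbauer_sq:
  assumes lam: "lam \<ge> 1" and t: "zeros_in_0_pi (\<lambda>x. gegenbauer lam n (cos x)) n t"
  shows "((\<lambda>th. cos (2 * real m * th) * ln ((gegenbauer lam n (cos th)) ^ 2)) has_integral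
          (if m = 0 then 2 * pi * ln (gegenbauer_weight lam n)
           else - pi / real m * (\<Sum>i<n. cos (2 * real m * t i)))) {0..pi}"
proof (rule has_integral_spike_finite)
  show "finite (t ` {..<n})" by simp
next
  fix th assume "th \<in> {0..pi} - t ` {..<n}"
  from ln_gegenbauer_sq_eq_sum[OF lam t this]
  show "cos (2 * real m * th) * ln ((gegenbauer lam n (cos th)) ^ 2) =
        cos (2 * real m * th) * (2 * ln (gegenbauer_weight lam n))
        + (\<Sum>i<n. cos (2 * real m * th) * log_sin_sq (th - t i))"
    by (simp add: algebra_simps sum_distrib_left sum_distrib_right)
next
  have "((\<lambda>th. cos (2 * real m * th) * (2 * ln (gegenbauer_weight lam n))
                + (\<Sum>i<n. cos (2 * real m * th) * log_sin_sq (th - t i))) has_integral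
          (if m = 0 then pi else 0) * (2 * ln (gegenbauer_weight lam n))
          + (\<Sum>i<n. if m = 0 then 0 else - pi * cos (2 * real m * t i) / real m)) {0..pi}"
    using t
    by (intro has_integral_add has_integral_mult_left has_integral_cos_even_multiple has_integral_sum
        has_integral_cos_mult_log_sin_sq_shift) (auto simp: zeros_in_0_pi_def)
  moreover have "(if m = 0 then pi else 0) * (2 * ln (gegenbauer_weight lam n))
          + (\<Sum>i<n. if m = 0 then 0 else - pi * cos (2 * real m * t i) / real m)
      = (if m = 0 then 2 * pi * ln (gegenbauer_weight lam n)
         else - pi / real m * (\<Sum>i<n. cos (2 * real m * t i)))"
    by (cases "m = 0") (simp_all add: sum_distrib_left)
  ultimately show "((\<lambda>th. cos (2 * real m * th) * (2 * ln (gegenbauer_weight lam n))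
                + (\<Sum>i<n. cos (2 * real m * th) * log_sin_sq (th - t i))) has_integral
          (if m = 0 then 2 * pi * ln (gegenbauer_weight lam n)
           else - pi / real m * (\<Sum>i<n. cos (2 * real m * t i)))) {0..pi}"
    by simp
qed

lemma Re_higher_deriv_Ln_gpoly_ratio:
  assumes lam: "lam \<ge> 1" and t: "zeros_in_0_pi (\<lambda>x. gegenbauer lam n (cos x)) n t" and m: "m \<ge> 1"
  shows "Re ((deriv ^^ (2 * m)) (\<lambda>z. Ln (gpoly lam n z / gpoly lam n 0)) 0) =
         - 2 * fact (2 * m - 1) * ((2 * real lam - 1) + (\<Sum>i<n. cos (2 * real m * t i)))"
proof -
  have Re_cis: "Re ((1 / cis (2 * x)) ^ m) = cos (2 * real m * x)" for x
  proof -
    have "1 / cis (2 * x) = cis (- (2 * x))" using cis_divide[of 0 "2 * x"] by simp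
    hence "(1 / cis (2 * x)) ^ m = cis (real m * (- (2 * x)))" by (simp only: Complex.DeMoivre)
    thus ?thesis by (simp add: algebra_simps)
  qed
  have "(deriv ^^ (2 * m)) (\<lambda>z. Ln (gpoly lam n z / gpoly lam n 0)) 0
      = fact (2 * m - 1) * (- 2 * of_nat (2 * lam - 1) - 2 * (\<Sum>i<n. (1 / cis (2 * t i)) ^ m))"
    unfolding gpoly_ratio_eq_prod[OF lam t] by (rule higher_deriv_Ln_prod) (use m in simp_all)
  hence "Re ((deriv ^^ (2 * m)) (\<lambda>z. Ln (gpoly lam n z / gpoly lam n 0)) 0)
      = fact (2 * m - 1) * (- 2 * (2 * real lam - 1) - 2 * (\<Sum>i<n. cos (2 * real m * t i)))"
    using lam by (simp add: Re_sum Re_cis of_nat_diff)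
  thus ?thesis by (simp add: algebra_simps)
qed

theorem theorem1:
  fixes lam n :: nat
  assumes "lam \<ge> 1"
  shows "(((\<lambda>\<theta>. cos (2 * real (0::nat) * \<theta>) * ln ((gegenbauer lam n (cos \<theta>))^2)) has_integral
            (2 * pi * ln (pochhammer (real lam) n / fact n))) {0..pi}) \<and>
         (\<forall>m::nat. m \<ge> 1 \<longrightarrow>
         ((\<lambda>\<theta>. cos (2 * real m * \<theta>) * ln ((gegenbauer lam n (cos \<theta>))^2)) has_integral
            ((2 * real lam - 1) * pi / real m
             + pi / fact (2*m) *
               Re ((deriv ^^ (2*m)) (\<lambda>z. Ln (gpoly lam n z / gpoly lam n 0)) 0))) {0..pi})"
proof -
  obtain t where t: "zeros_in_0_pi (\<lambda>x. gegenbauer lam n (cos x)) n t"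
    using gegenbauer_cos_zeros[OF assms] by blast
  have "((\<lambda>\<theta>. cos (2 * real m * \<theta>) * ln ((gegenbauer lam n (cos \<theta>))^2)) has_integral
          ((2 * real lam - 1) * pi / real m
           + pi / fact (2*m) * Re ((deriv ^^ (2*m)) (\<lambda>z. Ln (gpoly lam n z / gpoly lam n 0)) 0))) {0..pi}"
    if m: "m \<ge> 1" for m
  proof -
    define S where "S = (\<Sum>i<n. cos (2 * real m * t i))"
    define F where "F = (fact (2 * m - 1) :: real)"
    have "F > 0" "real m > 0" using m by (simp_all add: F_def)
    have "fact (2 * m) = 2 * real m * F"
      using fact_reduce[of "2 * m"] m by (simp add: F_def)
    hence "(2 * real lam - 1) * pi / real m
           + pi / fact (2*m) * Re ((deriv ^^ (2*m)) (\<lambda>z. Ln (gpoly lam n z / gpoly lam n 0)) 0)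
         = (2 * real lam - 1) * pi / real m + pi / (2 * real m * F) * (- 2 * F * ((2 * real lam - 1) + S))"
      by (simp add: Re_higher_deriv_Ln_gpoly_ratio[OF assms t m] F_def S_def)
    also have "\<dots> = - pi / real m * S"
      using \<open>F > 0\<close> \<open>real m > 0\<close> by (simp add: field_simps)
    finally have "(2 * real lam - 1) * pi / real m
           + pi / fact (2*m) * Re ((deriv ^^ (2*m)) (\<lambda>z. Ln (gpoly lam n z / gpoly lam n 0)) 0)
         = - pi / real m * (\<Sum>i<n. cos (2 * real m * t i))"
      by (simp add: S_def)
    thus ?thesis using has_integral_cos_mult_ln_gegenbauer_sq[OF assms t, of m] m by simp
  qed
  moreover have "((\<lambda>\<theta>. cos (2 * real (0::nat) * \<theta>) * ln ((gegenbauer lam n (cos \<theta>))^2)) has_integral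
            (2 * pi * ln (pochhammer (real lam) n / fact n))) {0..pi}"
    using has_integral_cos_mult_ln_gegenbauer_sq[OF assms t, of 0] by (simp add: gegenbauer_weight_def)
  ultimately show ?thesis by blast
qed

end
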